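(* Let $\mathscr{R}$ be a von Neumann algebra. If $\mathscr{I}$ is a norm-closed left ideal of $\mathscr{R}$ which is finitely generated, then $\mathscr{I}$ is weak-operator closed.
   Context: A left ideal $\mathscr{I}$ of $\mathscr{R}$ is finitely generated if it is the smallest left ideal of $\mathscr{R}$ containing some finite subset of $\mathscr{R}$ (generation in the purely algebraic sense). *)

theory Defs
  imports "HOL-Analysis.Analysis"
begin

text \<open>Complex Hilbert spaces are not in the distribution: a complex Hilbert space is
  a real Banach space 'h together with a complex scalar multiplication extending the real one
  and a complex inner product (linear in the first argument) inducing the norm.\<close>

locale complex_hilbert_space =
  fixes scaleC :: "complex \<Rightarrow> 'h::banach \<Rightarrow> 'h"
    and cinner :: "'h \<Rightarrow> 'h \<Rightarrow> complex"
  assumes scaleC_add_right: "scaleC a (x + y) = scaleC a x + scaleC a y"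
    and scaleC_add_left: "scaleC (a + b) x = scaleC a x + scaleC b x"
    and scaleC_scaleC: "scaleC a (scaleC b x) = scaleC (a * b) x"
    and scaleC_one: "scaleC 1 x = x"
    and scaleR_scaleC: "scaleR r x = scaleC (complex_of_real r) x"
    and cinner_add_left: "cinner (x + y) z = cinner x z + cinner y z"
    and cinner_scaleC_left: "cinner (scaleC a x) y = a * cinner x y"
    and cinner_commute: "cinner y x = cnj (cinner x y)"
    and cinner_self_norm: "cinner x x = complex_of_real ((norm x)\<^sup>2)"

definition bounded_op :: "(complex \<Rightarrow> 'h::banach \<Rightarrow> 'h) \<Rightarrow> ('h \<Rightarrow> 'h) \<Rightarrow> bool" where
  "bounded_op scaleC T \<longleftrightarrow>
     (\<forall>x y. T (x + y) = T x + T y) \<and>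
     (\<forall>a x. T (scaleC a x) = scaleC a (T x)) \<and>
     (\<exists>K. \<forall>x. norm (T x) \<le> K * norm x)"

text \<open>Closedness in the weak-operator topology of B(H): every bounded operator lying in the
  WOT-closure (every basic WOT neighbourhood meets S) belongs to S.\<close>
definition wot_closed ::
  "(complex \<Rightarrow> 'h::banach \<Rightarrow> 'h) \<Rightarrow> ('h \<Rightarrow> 'h \<Rightarrow> complex) \<Rightarrow> ('h \<Rightarrow> 'h) set \<Rightarrow> bool" where
  "wot_closed scaleC cinner S \<longleftrightarrow>
     (\<forall>T. bounded_op scaleC T \<and>
          (\<forall>\<epsilon>>0. \<forall>P. finite P \<longrightarrow>
              (\<exists>A\<in>S. \<forall>(x, y)\<in>P. cmod (cinner (T x - A x) y) < \<epsilon>))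
        \<longrightarrow> T \<in> S)"

definition norm_closed :: "(complex \<Rightarrow> 'h::banach \<Rightarrow> 'h) \<Rightarrow> ('h \<Rightarrow> 'h) set \<Rightarrow> bool" where
  "norm_closed scaleC S \<longleftrightarrow>
     (\<forall>T. bounded_op scaleC T \<and>
          (\<forall>\<epsilon>>0. \<exists>A\<in>S. \<forall>x. norm (T x - A x) \<le> \<epsilon> * norm x)
        \<longrightarrow> T \<in> S)"

definition von_neumann_algebra ::
  "(complex \<Rightarrow> 'h::banach \<Rightarrow> 'h) \<Rightarrow> ('h \<Rightarrow> 'h \<Rightarrow> complex) \<Rightarrow> ('h \<Rightarrow> 'h) set \<Rightarrow> bool" where
  "von_neumann_algebra scaleC cinner R \<longleftrightarrow>
     (\<forall>T\<in>R. bounded_op scaleC T) \<and>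
     id \<in> R \<and>
     (\<forall>S\<in>R. \<forall>T\<in>R. (\<lambda>x. S x + T x) \<in> R) \<and>
     (\<forall>a. \<forall>T\<in>R. (\<lambda>x. scaleC a (T x)) \<in> R) \<and>
     (\<forall>S\<in>R. \<forall>T\<in>R. S \<circ> T \<in> R) \<and>
     (\<forall>T\<in>R. \<exists>S\<in>R. \<forall>x y. cinner (T x) y = cinner x (S y)) \<and>
     wot_closed scaleC cinner R"

definition left_ideal ::
  "(complex \<Rightarrow> 'h::banach \<Rightarrow> 'h) \<Rightarrow> ('h \<Rightarrow> 'h) set \<Rightarrow> ('h \<Rightarrow> 'h) set \<Rightarrow> bool" where
  "left_ideal scaleC R I \<longleftrightarrow>
     I \<subseteq> R \<and>
     (\<lambda>x. 0) \<in> I \<and>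
     (\<forall>S\<in>I. \<forall>T\<in>I. (\<lambda>x. S x + T x) \<in> I) \<and>
     (\<forall>a. \<forall>T\<in>I. (\<lambda>x. scaleC a (T x)) \<in> I) \<and>
     (\<forall>A\<in>R. \<forall>T\<in>I. A \<circ> T \<in> I)"

definition left_ideal_generated ::
  "(complex \<Rightarrow> 'h::banach \<Rightarrow> 'h) \<Rightarrow> ('h \<Rightarrow> 'h) set \<Rightarrow> ('h \<Rightarrow> 'h) set \<Rightarrow> ('h \<Rightarrow> 'h) set" where
  "left_ideal_generated scaleC R F = \<Inter>{J. left_ideal scaleC R J \<and> F \<subseteq> J}"

definition finitely_generated_left_ideal ::
  "(complex \<Rightarrow> 'h::banach \<Rightarrow> 'h) \<Rightarrow> ('h \<Rightarrow> 'h) set \<Rightarrow> ('h \<Rightarrow> 'h) set \<Rightarrow> bool" where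
  "finitely_generated_left_ideal scaleC R I \<longleftrightarrow>
     (\<exists>F. finite F \<and> F \<subseteq> R \<and> I = left_ideal_generated scaleC R F)"

end

theory Submission
  imports Defs
begin

text \<open>Let F generate I and put H = (1/M) (sum of a* a over a in F) for a large M: a positive
  contraction in I whose kernel is the common kernel of F. As I is norm closed, it contains the
  square root S and the fourth root Q of H, which are norm limits of polynomials in H without
  constant term. Writing Q as a sum of terms B a with B in R bounds the square of the norm of Q x by
  a multiple of the quadratic form of H at x, i.e. S <= K S^2, and this spectral gap passes to H:
  1 - H shrinks the range of H by a fixed factor below 1. Hence the powers (1 - H)^n converge
  geometrically to the projection onto ker H, and every T in R vanishing on ker H is a norm limit
  of the elements T (sum of (1 - H)^j for j < n) H of I. Finally a weak-operator limit of elements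
  of I lies in R and vanishes on the common kernel of F, so it lies in I.\<close>

text \<open>The coefficients of the power series f t = 1 - sqrt (1 - t), determined by 2 f = t + f^2.\<close>

function sqrt_coeff :: "nat \<Rightarrow> real" where
  "sqrt_coeff n = (if n = 0 then 0 else
     ((if n = 1 then 1 else 0) + (\<Sum>k\<in>{1..<n}. sqrt_coeff k * sqrt_coeff (n - k))) / 2)"
  by auto
termination
  by (relation "Wellfounded.measure id") auto

declare sqrt_coeff.simps[simp del]

lemma sqrt_coeff_0[simp]: "sqrt_coeff 0 = 0"
  by (simp add: sqrt_coeff.simps)

lemma sqrt_coeff_nonneg: "sqrt_coeff n \<ge> 0"
proof (induction n rule: less_induct)
  case (less n)
  have "(\<Sum>k\<in>{1..<n}. sqrt_coeff k * sqrt_coeff (n - k)) \<ge> 0"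
    by (rule sum_nonneg) (use less in auto)
  then show ?case by (subst sqrt_coeff.simps) simp
qed

lemma sqrt_coeff_convolution:
  "2 * sqrt_coeff n = (if n = 1 then 1 else 0) + (\<Sum>k\<le>n. sqrt_coeff k * sqrt_coeff (n - k))"
proof (cases "n = 0")
  case False
  have "{..n} = insert 0 (insert n {1..<n})" using False by auto
  then have "(\<Sum>k\<le>n. sqrt_coeff k * sqrt_coeff (n - k)) =
      (\<Sum>k\<in>{1..<n}. sqrt_coeff k * sqrt_coeff (n - k))"
    using False by simp
  then show ?thesis using False by (subst sqrt_coeff.simps) simp
qed simp

lemma finite_triangle: "finite {(i, j). i + j \<le> (N::nat)}"
  by (rule finite_subset[of _ "{..N} \<times> {..N}"]) auto

lemma sqrt_coeff_psum_double:
  "2 * (\<Sum>n<Suc N. sqrt_coeff n) =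
     (if N = 0 then 0 else 1) + (\<Sum>(i, j)\<in>{(i, j). i + j \<le> N}. sqrt_coeff i * sqrt_coeff j)"
proof -
  have "2 * (\<Sum>n<Suc N. sqrt_coeff n) =
      (\<Sum>n\<le>N. if n = 1 then 1 else 0) + (\<Sum>n\<le>N. \<Sum>k\<le>n. sqrt_coeff k * sqrt_coeff (n - k))"
    by (simp add: sum_distrib_left lessThan_Suc_atMost sqrt_coeff_convolution sum.distrib)
  also have "(\<Sum>n\<le>N. if n = 1 then 1 else 0::real) = (if N = 0 then 0 else 1)"
    by (cases "N = 0") (auto simp: sum.delta)
  also have "(\<Sum>n\<le>N. \<Sum>k\<le>n. sqrt_coeff k * sqrt_coeff (n - k)) =
      (\<Sum>(i, j)\<in>{(i, j). i + j \<le> N}. sqrt_coeff i * sqrt_coeff j)"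
    by (rule sum.triangle_reindex_eq[symmetric])
  finally show ?thesis .
qed

lemma sqrt_coeff_psum_le_1: "(\<Sum>n<N. sqrt_coeff n) \<le> 1"
proof (induction N)
  case (Suc N)
  have "(\<Sum>(i, j)\<in>{(i, j). i + j \<le> N}. sqrt_coeff i * sqrt_coeff j) =
      (\<Sum>(i, j)\<in>{(i, j). i + j \<le> N} \<inter> {..<N} \<times> {..<N}. sqrt_coeff i * sqrt_coeff j)"
  proof (rule sum.mono_neutral_right[OF finite_triangle])
    show "\<forall>p\<in>{(i, j). i + j \<le> N} - {(i, j). i + j \<le> N} \<inter> {..<N} \<times> {..<N}.
        (case p of (i, j) \<Rightarrow> sqrt_coeff i * sqrt_coeff j) = 0"
    proof (clarify)
      fix i j assume "i + j \<le> N" "(i, j) \<notin> {(i, j). i + j \<le> N} \<inter> {..<N} \<times> {..<N}"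
      then have "i = 0 \<or> j = 0" by auto
      then show "sqrt_coeff i * sqrt_coeff j = 0" by auto
    qed
  qed auto
  also have "\<dots> \<le> (\<Sum>(i, j)\<in>{..<N} \<times> {..<N}. sqrt_coeff i * sqrt_coeff j)"
    by (rule sum_mono2) (auto simp: sqrt_coeff_nonneg)
  also have "\<dots> = (\<Sum>n<N. sqrt_coeff n) * (\<Sum>n<N. sqrt_coeff n)"
    by (simp add: sum_product sum.cartesian_product)
  also have "\<dots> \<le> 1"
    using Suc by (simp add: mult_le_one sum_nonneg sqrt_coeff_nonneg)
  finally show ?case using sqrt_coeff_psum_double[of N] by (auto split: if_splits)
qed simp

lemma sqrt_coeff_sums: "sqrt_coeff sums 1"
proof -
  define P where "P N = (\<Sum>n<N. sqrt_coeff n)" for N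
  have "summable sqrt_coeff"
    by (rule summableI_nonneg_bounded[where x = 1])
       (auto simp: sqrt_coeff_nonneg sqrt_coeff_psum_le_1)
  then obtain L where lim: "P \<longlonglongrightarrow> L"
    unfolding P_def by (metis summable_LIMSEQ)
  have "strict_mono (\<lambda>M::nat. Suc (2 * M))" by (rule strict_monoI) simp
  from LIMSEQ_subseq_LIMSEQ[OF lim this] have odd: "(\<lambda>M. P (Suc (2 * M))) \<longlonglongrightarrow> L"
    by (simp add: comp_def)
  have "1 + P (Suc M) * P (Suc M) \<le> 2 * P (Suc (2 * M))" if "M \<ge> 1" for M
  proof -
    have "P (Suc M) * P (Suc M) =
        (\<Sum>(i, j)\<in>{..<Suc M} \<times> {..<Suc M}. sqrt_coeff i * sqrt_coeff j)"
      by (simp only: P_def sum_product sum.cartesian_product)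
    also have "\<dots> \<le> (\<Sum>(i, j)\<in>{(i, j). i + j \<le> 2 * M}. sqrt_coeff i * sqrt_coeff j)"
      by (rule sum_mono2[OF finite_triangle]) (auto simp: sqrt_coeff_nonneg)
    finally show ?thesis using sqrt_coeff_psum_double[of "2 * M"] that by (simp add: P_def)
  qed
  then have "\<forall>\<^sub>F M in sequentially. 1 + P (Suc M) * P (Suc M) \<le> 2 * P (Suc (2 * M))"
    by (rule eventually_sequentiallyI)
  moreover have "(\<lambda>M. P (Suc M)) \<longlonglongrightarrow> L" using lim by (rule LIMSEQ_Suc)
  ultimately have "1 + L * L \<le> 2 * L"
    by (intro tendsto_le[OF _ tendsto_mult_left[OF odd] tendsto_add[OF tendsto_const tendsto_mult]])
       simp_all
  then have "(L - 1)\<^sup>2 \<le> 0" by (simp add: power2_eq_square algebra_simps)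
  then have "L = 1" by simp
  with lim show ?thesis unfolding sums_def P_def by simp
qed

lemma sqrt_coeff_has_sum: "(sqrt_coeff has_sum 1) UNIV"
  by (rule sums_nonneg_imp_has_sum[OF sqrt_coeff_sums sqrt_coeff_nonneg])

lemma sqrt_coeff_infsum: "infsum sqrt_coeff UNIV = 1"
  by (rule infsumI[OF sqrt_coeff_has_sum])

lemma sqrt_coeff_summable_on: "sqrt_coeff summable_on A"
  using summable_on_subset_banach[of sqrt_coeff UNIV A] sqrt_coeff_has_sum
  by (auto simp: summable_on_def)

lemma sqrt_coeff_infsum_tail: "infsum sqrt_coeff {N..} = 1 - (\<Sum>n<N. sqrt_coeff n)"
proof -
  have "infsum sqrt_coeff ({..<N} \<union> {N..}) = infsum sqrt_coeff {..<N} + infsum sqrt_coeff {N..}"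
    by (rule infsum_Un_disjoint) (auto simp: sqrt_coeff_summable_on)
  moreover have "{..<N} \<union> {N..} = (UNIV :: nat set)" by auto
  ultimately show ?thesis by (simp add: sqrt_coeff_infsum)
qed

lemma sqrt_coeff_psum_tendsto: "(\<lambda>N. \<Sum>n<N. sqrt_coeff n) \<longlonglongrightarrow> 1"
  using sqrt_coeff_sums by (simp add: sums_def)

lemma sqrt_coeff_finite_sum_le_1: "finite F \<Longrightarrow> sum sqrt_coeff F \<le> 1"
proof -
  assume "finite F"
  then obtain N where "F \<subseteq> {..<N}" using finite_nat_bounded by blast
  then have "sum sqrt_coeff F \<le> (\<Sum>n<N. sqrt_coeff n)"
    by (intro sum_mono2) (auto simp: sqrt_coeff_nonneg)
  then show ?thesis using sqrt_coeff_psum_le_1[of N] by simp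
qed

lemma infsum_bounded_linear_summable:
  "bounded_linear h \<Longrightarrow> f summable_on A \<Longrightarrow> infsum (\<lambda>x. h (f x)) A = h (infsum f A)"
  by (rule infsumI[OF has_sum_bounded_linear[OF _ has_sum_infsum]])

lemma sqrt_coeff_abs_summable_on:
  fixes u :: "nat \<Rightarrow> 'a::real_normed_vector"
  assumes "\<And>n. norm (u n) \<le> B"
  shows "(\<lambda>n. norm (sqrt_coeff n *\<^sub>R u n)) summable_on A"
proof -
  have B: "B \<ge> 0" using assms[of 0] norm_ge_zero order_trans by blast
  have "(\<lambda>n. norm (norm (sqrt_coeff n *\<^sub>R u n))) summable_on A"
  proof (rule Infinite_Sum.abs_summable_on_comparison_test)
    show "(\<lambda>n. norm (B * sqrt_coeff n)) summable_on A"
      using summable_on_cmult_right[OF sqrt_coeff_summable_on, of B A] B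
      by (simp add: sqrt_coeff_nonneg abs_mult)
    show "norm (norm (sqrt_coeff n *\<^sub>R u n)) \<le> norm (B * sqrt_coeff n)" for n
      using assms[of n] B sqrt_coeff_nonneg[of n]
        mult_left_mono[of "norm (u n)" B "sqrt_coeff n"]
      by (simp add: abs_mult mult.commute)
  qed
  then show ?thesis by simp
qed

lemma sqrt_coeff_summable_on_scaleR:
  fixes u :: "nat \<Rightarrow> 'a::banach"
  shows "(\<And>n. norm (u n) \<le> B) \<Longrightarrow> (\<lambda>n. sqrt_coeff n *\<^sub>R u n) summable_on A"
  by (rule abs_summable_summable[OF sqrt_coeff_abs_summable_on])

lemma norm_sqrt_coeff_infsum_le:
  fixes u :: "nat \<Rightarrow> 'a::banach"
  assumes "\<And>n. norm (u n) \<le> B"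
  shows "norm (infsum (\<lambda>n. sqrt_coeff n *\<^sub>R u n) A) \<le> infsum sqrt_coeff A * B"
proof -
  have "norm (infsum (\<lambda>n. sqrt_coeff n *\<^sub>R u n) A) \<le>
      infsum (\<lambda>n. norm (sqrt_coeff n *\<^sub>R u n)) A"
    by (rule norm_infsum_bound[OF sqrt_coeff_abs_summable_on[OF assms]])
  also have "\<dots> \<le> infsum (\<lambda>n. sqrt_coeff n * B) A"
    using assms sqrt_coeff_nonneg
    by (intro infsum_mono sqrt_coeff_abs_summable_on summable_on_cmult_left sqrt_coeff_summable_on)
       (auto simp: mult_left_mono)
  also have "\<dots> = infsum sqrt_coeff A * B"
    by (rule infsum_cmult_left) (simp add: sqrt_coeff_summable_on)
  finally show ?thesis .
qed

lemma sqrt_coeff_product_summable: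
  assumes "B \<ge> 0"
  shows "(\<lambda>(k, l). B * (sqrt_coeff k * sqrt_coeff l)) summable_on UNIV \<times> UNIV"
proof (rule nonneg_bdd_above_summable_on)
  show "0 \<le> (case x of (k, l) \<Rightarrow> B * (sqrt_coeff k * sqrt_coeff l))" for x
    using assms by (cases x) (auto simp: sqrt_coeff_nonneg)
  show "bdd_above (sum (\<lambda>(k, l). B * (sqrt_coeff k * sqrt_coeff l)) `
      {F. F \<subseteq> UNIV \<times> UNIV \<and> finite F})"
  proof (rule bdd_aboveI2)
    fix F :: "(nat \<times> nat) set" assume "F \<in> {F. F \<subseteq> UNIV \<times> UNIV \<and> finite F}"
    then have F: "finite F" by simp
    have "sum (\<lambda>(k, l). B * (sqrt_coeff k * sqrt_coeff l)) F \<le>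
        sum (\<lambda>(k, l). B * (sqrt_coeff k * sqrt_coeff l)) (fst ` F \<times> snd ` F)"
      using F assms by (intro sum_mono2) (force simp: sqrt_coeff_nonneg)+
    also have "\<dots> = B * (sum sqrt_coeff (fst ` F) * sum sqrt_coeff (snd ` F))"
      unfolding sum_product by (simp only: sum.cartesian_product[symmetric] sum_distrib_left)
    also have "\<dots> \<le> B"
      using sqrt_coeff_finite_sum_le_1[of "fst ` F"] sqrt_coeff_finite_sum_le_1[of "snd ` F"] F assms
      by (simp add: mult_le_one sum_nonneg sqrt_coeff_nonneg mult_left_le)
    finally show "sum (\<lambda>(k, l). B * (sqrt_coeff k * sqrt_coeff l)) F \<le> B" .
  qed
qed

lemma sqrt_coeff_double_summable:
  fixes u :: "nat \<Rightarrow> 'a::banach"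
  assumes bound: "\<And>j. norm (u j) \<le> B"
  shows "(\<lambda>(k, l). (sqrt_coeff k * sqrt_coeff l) *\<^sub>R u (k + l)) summable_on UNIV \<times> UNIV"
proof -
  have B: "B \<ge> 0" using bound[of 0] norm_ge_zero order_trans by blast
  let ?g = "\<lambda>(k, l). B * (sqrt_coeff k * sqrt_coeff l)"
  have "(\<lambda>p. norm (norm (case p of (k, l) \<Rightarrow> (sqrt_coeff k * sqrt_coeff l) *\<^sub>R u (k + l))))
      summable_on UNIV \<times> UNIV"
  proof (rule Infinite_Sum.abs_summable_on_comparison_test[where g = ?g])
    show "(\<lambda>p. norm (?g p)) summable_on UNIV \<times> UNIV"
      using sqrt_coeff_product_summable[OF B] B
      by (simp add: case_prod_unfold abs_mult sqrt_coeff_nonneg)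
    fix p :: "nat \<times> nat"
    have "sqrt_coeff (fst p) * sqrt_coeff (snd p) * norm (u (fst p + snd p)) \<le>
        sqrt_coeff (fst p) * sqrt_coeff (snd p) * B"
      using bound[of "fst p + snd p"] sqrt_coeff_nonneg[of "fst p"] sqrt_coeff_nonneg[of "snd p"]
      by (intro mult_left_mono) auto
    then show "norm (norm (case p of (k, l) \<Rightarrow> (sqrt_coeff k * sqrt_coeff l) *\<^sub>R u (k + l))) \<le>
        norm (?g p)"
      using B sqrt_coeff_nonneg[of "fst p"] sqrt_coeff_nonneg[of "snd p"]
      by (simp add: case_prod_beta abs_mult mult.commute)
  qed
  then have "(\<lambda>p. norm (case p of (k, l) \<Rightarrow> (sqrt_coeff k * sqrt_coeff l) *\<^sub>R u (k + l)))
      summable_on UNIV \<times> UNIV"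
    by simp
  then show ?thesis by (rule abs_summable_summable)
qed

lemma sqrt_coeff_Cauchy_product:
  fixes u :: "nat \<Rightarrow> 'a::banach"
  assumes bound: "\<And>j. norm (u j) \<le> B"
  shows "infsum (\<lambda>k. sqrt_coeff k *\<^sub>R infsum (\<lambda>l. sqrt_coeff l *\<^sub>R u (k + l)) UNIV) UNIV =
    infsum (\<lambda>n. (\<Sum>k\<le>n. sqrt_coeff k * sqrt_coeff (n - k)) *\<^sub>R u n) UNIV"
proof -
  define f where "f = (\<lambda>(k, l). (sqrt_coeff k * sqrt_coeff l) *\<^sub>R u (k + l))"
  have f: "f summable_on UNIV \<times> UNIV"
    unfolding f_def by (rule sqrt_coeff_double_summable[OF bound])
  have "infsum f (UNIV \<times> UNIV) = infsum (\<lambda>k. infsum (\<lambda>l. f (k, l)) UNIV) UNIV"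
    using infsum_Sigma_banach[of f UNIV "\<lambda>_. UNIV"] f by simp
  also have "\<dots> = infsum (\<lambda>k. sqrt_coeff k *\<^sub>R infsum (\<lambda>l. sqrt_coeff l *\<^sub>R u (k + l)) UNIV) UNIV"
    by (simp add: f_def infsum_scaleR_right[symmetric])
  finally have by_rows: "infsum f (UNIV \<times> UNIV) = \<dots>" .
  define g where "g = (\<lambda>(n::nat, k::nat). (k, n - k))"
  have bij: "bij_betw g (Sigma UNIV atMost) (UNIV \<times> UNIV)"
    by (rule bij_betw_byWitness[where f' = "\<lambda>(k, l). (k + l, k)"]) (auto simp: g_def)
  have "infsum f (UNIV \<times> UNIV) = infsum (\<lambda>p. f (g p)) (Sigma UNIV atMost)"
    by (rule infsum_reindex_bij_betw[OF bij, symmetric])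
  also have "\<dots> = infsum (\<lambda>n. infsum (\<lambda>k. f (g (n, k))) {..n}) UNIV"
  proof -
    have "(\<lambda>p. f (g p)) summable_on Sigma UNIV atMost"
      using summable_on_reindex_bij_betw[OF bij] f by blast
    then show ?thesis using infsum_Sigma_banach[of "\<lambda>p. f (g p)" UNIV atMost] by simp
  qed
  also have "\<dots> = infsum (\<lambda>n. (\<Sum>k\<le>n. sqrt_coeff k * sqrt_coeff (n - k)) *\<^sub>R u n) UNIV"
  proof (rule infsum_cong)
    fix n
    have "infsum (\<lambda>k. f (g (n, k))) {..n} = (\<Sum>k\<le>n. (sqrt_coeff k * sqrt_coeff (n - k)) *\<^sub>R u n)"
      by (simp, rule sum.cong) (auto simp: f_def g_def)
    then show "infsum (\<lambda>k. f (g (n, k))) {..n} =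
        (\<Sum>k\<le>n. sqrt_coeff k * sqrt_coeff (n - k)) *\<^sub>R u n"
      by (simp add: scaleR_sum_left)
  qed
  finally show ?thesis using by_rows by simp
qed

lemma sqrt_coeff_series_square:
  fixes u :: "nat \<Rightarrow> 'a::banach"
  assumes bound: "\<And>j. norm (u j) \<le> B"
  shows "infsum (\<lambda>k. sqrt_coeff k *\<^sub>R infsum (\<lambda>l. sqrt_coeff l *\<^sub>R u (k + l)) UNIV) UNIV =
    2 *\<^sub>R infsum (\<lambda>n. sqrt_coeff n *\<^sub>R u n) UNIV - u 1"
proof -
  have "((\<lambda>n. 2 *\<^sub>R (sqrt_coeff n *\<^sub>R u n)) has_sum 2 *\<^sub>R infsum (\<lambda>n. sqrt_coeff n *\<^sub>R u n) UNIV) UNIV"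
    by (rule has_sum_scaleR[OF has_sum_infsum[OF sqrt_coeff_summable_on_scaleR[OF bound]]])
  moreover have "((\<lambda>n::nat. if n = 1 then u 1 else 0) has_sum u 1) UNIV"
  proof -
    have "((\<lambda>n::nat. if n = 1 then u 1 else 0) has_sum u 1 + 0) ({1} \<union> (UNIV - {1}))"
      by (intro has_sum_Un_disjoint has_sum_0) (auto simp: has_sum_finite_iff)
    moreover have "{1::nat} \<union> (UNIV - {1}) = UNIV" by auto
    ultimately show ?thesis by simp
  qed
  ultimately have "((\<lambda>n. 2 *\<^sub>R (sqrt_coeff n *\<^sub>R u n) + - (if n = 1 then u 1 else 0)) has_sum
      (2 *\<^sub>R infsum (\<lambda>n. sqrt_coeff n *\<^sub>R u n) UNIV + - u 1)) UNIV"
    by (intro has_sum_add) (simp_all add: has_sum_uminus)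
  moreover have "2 *\<^sub>R (sqrt_coeff n *\<^sub>R u n) + - (if n = 1 then u 1 else 0) =
      (\<Sum>k\<le>n. sqrt_coeff k * sqrt_coeff (n - k)) *\<^sub>R u n" for n
    using sqrt_coeff_convolution[of n] by (cases "n = 1") (simp_all add: scaleR_diff_left)
  ultimately have "infsum (\<lambda>n. (\<Sum>k\<le>n. sqrt_coeff k * sqrt_coeff (n - k)) *\<^sub>R u n) UNIV =
      2 *\<^sub>R infsum (\<lambda>n. sqrt_coeff n *\<^sub>R u n) UNIV - u 1"
    by (intro infsumI) simp
  then show ?thesis using sqrt_coeff_Cauchy_product[of u B, OF bound] by simp
qed

lemma geometric_Cauchy_converges:
  fixes X :: "nat \<Rightarrow> 'a::banach"
  assumes q: "0 \<le> q" "q < 1" and bound: "\<And>n k. norm (X n - X (n + k)) \<le> C * q ^ n"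
  obtains p where "X \<longlonglongrightarrow> p" "\<And>n. norm (X n - p) \<le> C * q ^ n"
proof -
  have "Cauchy X"
  proof (rule CauchyI)
    fix e :: real assume e: "0 < e"
    have "(\<lambda>n. (\<bar>C\<bar> + 1) * q ^ n) \<longlonglongrightarrow> (\<bar>C\<bar> + 1) * 0"
      using q by (intro tendsto_mult tendsto_const LIMSEQ_power_zero) simp
    from LIMSEQ_D[OF this e] obtain M where M: "\<And>n. n \<ge> M \<Longrightarrow> \<bar>(\<bar>C\<bar> + 1) * q ^ n\<bar> < e"
      by auto
    have close: "norm (X a - X b) < e" if "M \<le> a" "a \<le> b" for a b
    proof -
      obtain k where b: "b = a + k" using \<open>a \<le> b\<close> le_Suc_ex by blast
      have "norm (X a - X b) \<le> C * q ^ a" unfolding b by (rule bound)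
      also have "\<dots> \<le> (\<bar>C\<bar> + 1) * q ^ a" using q by (intro mult_right_mono) simp_all
      also have "\<dots> < e" using M[of a] that q by simp
      finally show ?thesis .
    qed
    show "\<exists>M. \<forall>m\<ge>M. \<forall>n\<ge>M. norm (X m - X n) < e"
    proof (intro exI allI impI)
      fix m n assume mn: "M \<le> m" "M \<le> n"
      show "norm (X m - X n) < e"
      proof (cases "m \<le> n")
        case False
        then show ?thesis using close[of n m] mn by (simp add: norm_minus_commute)
      qed (use close mn in blast)
    qed
  qed
  then obtain p where p: "X \<longlonglongrightarrow> p" using Cauchy_convergent_iff convergent_def by blast
  have "norm (X n - p) \<le> C * q ^ n" for n
  proof -
    have "(\<lambda>k. X (k + n)) \<longlonglongrightarrow> p" using p by (rule LIMSEQ_ignore_initial_segment)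
    then have "(\<lambda>k. norm (X n - X (n + k))) \<longlonglongrightarrow> norm (X n - p)"
      by (intro tendsto_norm tendsto_diff tendsto_const) (simp add: add.commute)
    moreover have "\<forall>\<^sub>F k in sequentially. norm (X n - X (n + k)) \<le> C * q ^ n"
      by (simp add: bound)
    ultimately show ?thesis by (rule tendsto_le[OF trivial_limit_sequentially tendsto_const])
  qed
  with p show ?thesis using that by blast
qed

context complex_hilbert_space
begin

lemma scaleC_zero_left[simp]: "scaleC 0 x = 0"
  using scaleC_add_left[of 0 0 x] by simp

lemma scaleC_zero_right[simp]: "scaleC a 0 = 0"
  using scaleC_add_right[of a 0 0] by simp

lemma cinner_zero_left[simp]: "cinner 0 y = 0"
  using cinner_add_left[of 0 0 y] by simp

lemma cinner_minus_left: "cinner (- x) y = - cinner x y"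
  using cinner_add_left[of x "- x" y] by (simp add: eq_neg_iff_add_eq_0 add.commute)

lemma cinner_diff_left: "cinner (x - y) z = cinner x z - cinner y z"
  using cinner_add_left[of x "- y" z] cinner_minus_left[of y z] by simp

lemma cinner_add_right: "cinner x (y + z) = cinner x y + cinner x z"
  by (metis cinner_add_left cinner_commute complex_cnj_add)

lemma cinner_zero_right[simp]: "cinner x 0 = 0"
  by (metis cinner_commute cinner_zero_left complex_cnj_zero)

lemma cinner_minus_right: "cinner x (- y) = - cinner x y"
  by (metis cinner_commute cinner_minus_left complex_cnj_minus)

lemma cinner_diff_right: "cinner x (y - z) = cinner x y - cinner x z"
  by (metis cinner_commute cinner_diff_left complex_cnj_diff)

lemma cinner_scaleC_right: "cinner x (scaleC a y) = cnj a * cinner x y"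
  by (metis cinner_commute cinner_scaleC_left complex_cnj_cnj complex_cnj_mult)

lemma cinner_scaleR_left: "cinner (r *\<^sub>R x) y = complex_of_real r * cinner x y"
  by (simp add: scaleR_scaleC cinner_scaleC_left)

lemma cinner_scaleR_right: "cinner x (r *\<^sub>R y) = complex_of_real r * cinner x y"
  by (simp add: scaleR_scaleC cinner_scaleC_right)

lemma cinner_sum_left: "cinner (\<Sum>i\<in>A. f i) y = (\<Sum>i\<in>A. cinner (f i) y)"
  by (induction A rule: infinite_finite_induct) (auto simp: cinner_add_left)

lemma cinner_sum_right: "cinner y (\<Sum>i\<in>A. f i) = (\<Sum>i\<in>A. cinner y (f i))"
  by (induction A rule: infinite_finite_induct) (auto simp: cinner_add_right)

lemma Re_cinner_self: "Re (cinner x x) = (norm x)\<^sup>2"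
  by (simp add: cinner_self_norm)

lemma Re_cinner_commute: "Re (cinner y x) = Re (cinner x y)"
  by (simp add: cinner_commute[of y x])

lemma norm_add_square: "(norm (x + y))\<^sup>2 = (norm x)\<^sup>2 + (norm y)\<^sup>2 + 2 * Re (cinner x y)"
proof -
  have "cinner (x + y) (x + y) = cinner x x + cinner x y + cinner y x + cinner y y"
    by (simp add: cinner_add_left cinner_add_right)
  then show ?thesis
    using Re_cinner_commute[of x y] by (simp add: Re_cinner_self[symmetric])
qed

lemma norm_diff_square: "(norm (x - y))\<^sup>2 = (norm x)\<^sup>2 + (norm y)\<^sup>2 - 2 * Re (cinner x y)"
  using norm_add_square[of x "- y"] by (simp add: cinner_minus_right)

lemma norm_scaleC: "norm (scaleC a x) = cmod a * norm x"
proof -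
  have "(norm (scaleC a x))\<^sup>2 = Re (a * cnj a * cinner x x)"
    by (simp only: Re_cinner_self[symmetric] cinner_scaleC_left cinner_scaleC_right
        mult.assoc mult.left_commute[of a "cnj a"])
  also have "\<dots> = (cmod a * norm x)\<^sup>2"
    by (simp only: complex_norm_square[symmetric]) (simp add: cinner_self_norm power_mult_distrib)
  finally show ?thesis by (simp add: power2_eq_iff_nonneg)
qed

lemma Re_cinner_Cauchy_Schwarz: "Re (cinner x y) \<le> norm x * norm y"
proof (cases "y = 0")
  case False
  define r where "r = Re (cinner x y)"
  define t where "t = - r / (norm y)\<^sup>2"
  have ny: "(norm y)\<^sup>2 > 0" using False by simp
  have "0 \<le> (norm (x + t *\<^sub>R y))\<^sup>2" by simp
  also have "\<dots> = (norm x)\<^sup>2 + t\<^sup>2 * (norm y)\<^sup>2 + 2 * t * r"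
    by (simp add: norm_add_square cinner_scaleR_right r_def power_mult_distrib)
  also have "\<dots> = (norm x)\<^sup>2 - r\<^sup>2 / (norm y)\<^sup>2"
    using ny by (simp add: t_def field_simps power2_eq_square)
  finally have "r\<^sup>2 \<le> (norm x * norm y)\<^sup>2" using ny by (simp add: field_simps power_mult_distrib)
  then have "\<bar>r\<bar> \<le> \<bar>norm x * norm y\<bar>" by (simp only: abs_le_square_iff)
  then show ?thesis by (simp add: r_def)
qed simp

lemma cinner_Cauchy_Schwarz: "cmod (cinner x y) \<le> norm x * norm y"
proof (cases "cinner x y = 0")
  case False
  \<comment> \<open>rotate x by a unit scalar making the inner product real and nonnegative\<close>
  define u where "u = cnj (cinner x y) / complex_of_real (cmod (cinner x y))"
  have u: "cmod u = 1" using False by (simp add: u_def norm_divide)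
  have "cinner (scaleC u x) y = cnj (cinner x y) * cinner x y / complex_of_real (cmod (cinner x y))"
    by (simp add: u_def cinner_scaleC_left)
  also have "\<dots> = complex_of_real (cmod (cinner x y))"
    using False
    by (simp only: complex_norm_square[symmetric] mult.commute[of "cnj (cinner x y)"])
       (simp add: power2_eq_square)
  finally have "Re (cinner (scaleC u x) y) = cmod (cinner x y)" by simp
  with Re_cinner_Cauchy_Schwarz[of "scaleC u x" y] show ?thesis by (simp add: norm_scaleC u)
qed simp

lemma bounded_linear_cinner_left: "bounded_linear (\<lambda>x. cinner x y)"
  by (rule bounded_linear_intro[where K = "norm y"])
     (simp_all add: cinner_add_left cinner_scaleR_left scaleR_conv_of_real cinner_Cauchy_Schwarz)

lemma bounded_linear_cinner_right: "bounded_linear (\<lambda>y. cinner x y)"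
  using cinner_Cauchy_Schwarz[of x]
  by (intro bounded_linear_intro[where K = "norm x"])
     (simp_all add: cinner_add_right cinner_scaleR_right scaleR_conv_of_real mult.commute)

lemma bounded_linear_scaleC: "bounded_linear (scaleC a)"
  by (rule bounded_linear_intro[where K = "cmod a"])
     (simp_all add: scaleC_add_right scaleR_scaleC scaleC_scaleC mult.commute norm_scaleC)

abbreviation bop where "bop T \<equiv> bounded_op scaleC T"

lemma bop_add: "bop T \<Longrightarrow> T (x + y) = T x + T y"
  by (simp add: bounded_op_def)

lemma bop_scaleC: "bop T \<Longrightarrow> T (scaleC a x) = scaleC a (T x)"
  by (simp add: bounded_op_def)

lemma bop_zero[simp]: "bop T \<Longrightarrow> T 0 = 0"
  using bop_add[of T 0 0] by simp

lemma bop_diff: "bop T \<Longrightarrow> T (x - y) = T x - T y"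
  by (metis add_diff_cancel bop_add diff_add_cancel)

lemma bop_scaleR: "bop T \<Longrightarrow> T (r *\<^sub>R x) = r *\<^sub>R T x"
  by (simp add: scaleR_scaleC bop_scaleC)

lemma bop_sum: "bop T \<Longrightarrow> T (\<Sum>i\<in>A. f i) = (\<Sum>i\<in>A. T (f i))"
  by (induction A rule: infinite_finite_induct) (auto simp: bop_add)

lemma bop_bound:
  assumes "bop T"
  obtains K where "K > 0" "\<And>x. norm (T x) \<le> K * norm x"
proof -
  obtain K where K: "\<And>x. norm (T x) \<le> K * norm x" using assms by (auto simp: bounded_op_def)
  show ?thesis
  proof (rule that[of "max K 1"])
    show "norm (T x) \<le> max K 1 * norm x" for x
      using K[of x] mult_right_mono[of K "max K 1" "norm x"] by simp
  qed simp
qed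

lemma bop_bounded_linear: "bop T \<Longrightarrow> bounded_linear T"
proof -
  assume T: "bop T"
  then obtain K where "\<And>x. norm (T x) \<le> K * norm x" using bop_bound by blast
  then show ?thesis
    by (intro bounded_linear_intro[where K = K]) (auto simp: bop_add[OF T] bop_scaleR[OF T] mult.commute)
qed

lemma bop_comp: "bop S \<Longrightarrow> bop T \<Longrightarrow> bop (\<lambda>x. S (T x))"
proof -
  assume S: "bop S" and T: "bop T"
  obtain K where K: "K > 0" "\<And>x. norm (S x) \<le> K * norm x" using bop_bound[OF S] by blast
  obtain L where L: "\<And>x. norm (T x) \<le> L * norm x" using bop_bound[OF T] by blast
  have "norm (S (T x)) \<le> (K * L) * norm x" for x
    using order_trans[OF K(2)[of "T x"] mult_left_mono[OF L[of x], of K]] K(1) by (simp add: mult.assoc)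
  then show ?thesis
    using bop_add[OF S] bop_add[OF T] bop_scaleC[OF S] bop_scaleC[OF T]
    by (auto simp: bounded_op_def)
qed

lemma bop_add_op: "bop S \<Longrightarrow> bop T \<Longrightarrow> bop (\<lambda>x. S x + T x)"
proof -
  assume S: "bop S" and T: "bop T"
  obtain K where K: "\<And>x. norm (S x) \<le> K * norm x" using bop_bound[OF S] by blast
  obtain L where L: "\<And>x. norm (T x) \<le> L * norm x" using bop_bound[OF T] by blast
  have "norm (S x + T x) \<le> (K + L) * norm x" for x
    using K[of x] L[of x] norm_triangle_ineq[of "S x" "T x"] by (simp add: distrib_right)
  then show ?thesis unfolding bounded_op_def
  proof (intro conjI allI exI)
    show "S (x + y) + T (x + y) = S x + T x + (S y + T y)" for x y
      by (simp add: bop_add[OF S] bop_add[OF T] algebra_simps)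
    show "S (scaleC a x) + T (scaleC a x) = scaleC a (S x + T x)" for a x
      by (simp add: bop_scaleC[OF S] bop_scaleC[OF T] scaleC_add_right)
  qed
qed

lemma bop_scaleC_op: "bop T \<Longrightarrow> bop (\<lambda>x. scaleC a (T x))"
proof -
  assume T: "bop T"
  obtain L where L: "\<And>x. norm (T x) \<le> L * norm x" using bop_bound[OF T] by blast
  have "norm (scaleC a (T x)) \<le> (cmod a * L) * norm x" for x
    using L[of x] by (simp add: norm_scaleC mult.assoc mult_left_mono)
  then show ?thesis unfolding bounded_op_def
  proof (intro conjI allI exI)
    show "scaleC a (T (x + y)) = scaleC a (T x) + scaleC a (T y)" for x y
      by (simp add: bop_add[OF T] scaleC_add_right)
    show "scaleC a (T (scaleC b x)) = scaleC b (scaleC a (T x))" for b x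
      by (simp add: bop_scaleC[OF T] scaleC_scaleC mult.commute)
  qed
qed

lemma bop_diff_op: "bop S \<Longrightarrow> bop T \<Longrightarrow> bop (\<lambda>x. S x - T x)"
  using bop_add_op[of S "\<lambda>x. scaleC (complex_of_real (-1)) (T x)"]
    bop_scaleC_op[of T "complex_of_real (-1)"]
  by (simp only: scaleR_scaleC[symmetric] scaleR_minus1_left diff_conv_add_uminus)

lemma bop_id[simp]: "bop (\<lambda>x. x)"
  by (auto simp: bounded_op_def intro: exI[of _ 1])

lemma bop_funpow: "bop T \<Longrightarrow> bop (T ^^ n)"
  by (induction n) (simp_all add: id_def comp_def bop_comp)

lemma funpow_commute: "(\<And>x. Z (T x) = T (Z x)) \<Longrightarrow> Z ((T ^^ n) x) = (T ^^ n) (Z x)"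
  by (induction n) simp_all

definition selfadj :: "('h \<Rightarrow> 'h) \<Rightarrow> bool" where
  "selfadj T \<longleftrightarrow> (\<forall>x y. cinner (T x) y = cinner x (T y))"

lemma selfadjD: "selfadj T \<Longrightarrow> cinner (T x) y = cinner x (T y)"
  by (simp add: selfadj_def)

lemma selfadj_funpow: "selfadj T \<Longrightarrow> selfadj (T ^^ n)"
  by (induction n) (simp_all add: selfadj_def funpow_swap1)

lemma selfadj_square_norm: "selfadj S \<Longrightarrow> Re (cinner (S (S x)) x) = (norm (S x))\<^sup>2"
  using selfadjD[of S "S x" x] by (simp add: Re_cinner_self)

definition pos_contraction :: "('h \<Rightarrow> 'h) \<Rightarrow> bool" where
  "pos_contraction T \<longleftrightarrow> bop T \<and> selfadj T \<and>
     (\<forall>x. 0 \<le> Re (cinner (T x) x) \<and> Re (cinner (T x) x) \<le> (norm x)\<^sup>2)"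

lemma pos_contraction_bop: "pos_contraction T \<Longrightarrow> bop T"
  by (simp add: pos_contraction_def)

lemma pos_contraction_selfadj: "pos_contraction T \<Longrightarrow> selfadj T"
  by (simp add: pos_contraction_def)

lemma pos_contraction_nonneg: "pos_contraction T \<Longrightarrow> 0 \<le> Re (cinner (T x) x)"
  by (simp add: pos_contraction_def)

lemma selfadj_norm_le:
  assumes T: "bop T" "selfadj T" and numrad: "\<And>z. \<bar>Re (cinner (T z) z)\<bar> \<le> (norm z)\<^sup>2"
  shows "norm (T x) \<le> norm x"
proof (cases "T x = 0")
  case False
  have polar: "4 * Re (cinner (T x) y) \<le> 2 * (norm x)\<^sup>2 + 2 * (norm y)\<^sup>2" for y
  proof -
    have "4 * Re (cinner (T x) y) = Re (cinner (T (x + y)) (x + y)) - Re (cinner (T (x - y)) (x - y))"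
      using selfadjD[OF T(2), of y x] Re_cinner_commute[of x "T y"] Re_cinner_commute[of y "T x"]
      by (simp add: bop_add[OF T(1)] bop_diff[OF T(1)] cinner_add_left cinner_add_right
          cinner_diff_left cinner_diff_right)
    also have "\<dots> \<le> (norm (x + y))\<^sup>2 + (norm (x - y))\<^sup>2"
      using numrad[of "x + y"] numrad[of "x - y"] by linarith
    also have "\<dots> = 2 * (norm x)\<^sup>2 + 2 * (norm y)\<^sup>2" by (simp add: norm_add_square norm_diff_square)
    finally show ?thesis .
  qed
  define t where "t = norm x / norm (T x)"
  have nt: "norm (T x) > 0" using False by simp
  have "Re (cinner (T x) (t *\<^sub>R T x)) = norm x * norm (T x)"
    using nt by (simp add: cinner_scaleR_right Re_cinner_self t_def power2_eq_square)
  moreover have "norm (t *\<^sub>R T x) = norm x" using nt by (simp add: t_def)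
  ultimately have "norm x * norm (T x) \<le> norm x * norm x"
    using polar[of "t *\<^sub>R T x"] by (simp add: power2_eq_square)
  moreover have "norm x > 0" using False T(1) by (metis bop_zero zero_less_norm_iff)
  ultimately show ?thesis by simp
qed simp

lemma pos_contraction_norm_le: "pos_contraction T \<Longrightarrow> norm (T x) \<le> norm x"
  unfolding pos_contraction_def by (rule selfadj_norm_le) auto

lemma pos_contraction_funpow_norm_le: "pos_contraction T \<Longrightarrow> norm ((T ^^ n) x) \<le> norm x"
  by (induction n) (auto intro: order_trans[OF pos_contraction_norm_le])

lemma pos_contraction_compl: "pos_contraction T \<Longrightarrow> pos_contraction (\<lambda>x. x - T x)"
  by (auto simp: pos_contraction_def selfadj_def bop_diff_op cinner_diff_left cinner_diff_right
      Re_cinner_self)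

lemma pos_contraction_funpow_nonneg:
  assumes "pos_contraction T"
  shows "0 \<le> Re (cinner ((T ^^ n) x) x)"
proof -
  have T: "selfadj T" "selfadj (T ^^ k)" for k
    using assms selfadj_funpow by (auto simp: pos_contraction_def)
  have "\<exists>k. n = k + k \<or> n = Suc (k + k)" by presburger
  then obtain k where "n = k + k \<or> n = Suc (k + k)" by blast
  then show ?thesis
  proof
    assume "n = k + k"
    then have "cinner ((T ^^ n) x) x = cinner ((T ^^ k) x) ((T ^^ k) x)"
      using selfadjD[OF T(2), of k "(T ^^ k) x" x] by (simp add: funpow_add)
    then show ?thesis by (simp add: Re_cinner_self)
  next
    assume "n = Suc (k + k)"
    then have "cinner ((T ^^ n) x) x = cinner (T ((T ^^ k) x)) ((T ^^ k) x)"
      using selfadjD[OF T(2), of k "T ((T ^^ k) x)" x] by (simp add: funpow_add funpow_swap1)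
    then show ?thesis using assms by (simp add: pos_contraction_def)
  qed
qed

lemma pos_contraction_funpow_le:
  assumes "pos_contraction T"
  shows "Re (cinner ((T ^^ n) x) x) \<le> (norm x)\<^sup>2"
proof -
  have "Re (cinner ((T ^^ n) x) x) \<le> norm ((T ^^ n) x) * norm x"
    using complex_Re_le_cmod cinner_Cauchy_Schwarz order_trans by blast
  also have "\<dots> \<le> norm x * norm x"
    using pos_contraction_funpow_norm_le[OF assms] by (simp add: mult_right_mono)
  finally show ?thesis by (simp add: power2_eq_square)
qed

text \<open>For a positive contraction Y, sqrt_series Y = 1 - sqrt (1 - Y).\<close>

definition sqrt_series :: "('h \<Rightarrow> 'h) \<Rightarrow> 'h \<Rightarrow> 'h" where
  "sqrt_series Y x = infsum (\<lambda>n. sqrt_coeff n *\<^sub>R (Y ^^ n) x) UNIV"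

lemma sqrt_series_summable:
  "pos_contraction Y \<Longrightarrow> (\<lambda>n. sqrt_coeff n *\<^sub>R (Y ^^ n) x) summable_on A"
  by (rule sqrt_coeff_summable_on_scaleR[where B = "norm x"]) (rule pos_contraction_funpow_norm_le)

lemma sqrt_series_apply_bop:
  assumes Y: "pos_contraction Y" and Z: "bounded_linear Z"
  shows "Z (sqrt_series Y x) = infsum (\<lambda>n. Z (sqrt_coeff n *\<^sub>R (Y ^^ n) x)) UNIV"
  unfolding sqrt_series_def by (rule infsum_bounded_linear_summable[OF Z sqrt_series_summable[OF Y], symmetric])

lemma sqrt_series_norm_le: "pos_contraction Y \<Longrightarrow> norm (sqrt_series Y x) \<le> norm x"
  unfolding sqrt_series_def
  using norm_sqrt_coeff_infsum_le[of "\<lambda>n. (Y ^^ n) x" "norm x" UNIV] pos_contraction_funpow_norm_le[of Y]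
  by (simp add: sqrt_coeff_infsum)

lemma sqrt_series_commute:
  assumes Y: "pos_contraction Y" and Z: "bop Z" and comm: "\<And>x. Z (Y x) = Y (Z x)"
  shows "Z (sqrt_series Y x) = sqrt_series Y (Z x)"
  using sqrt_series_apply_bop[OF Y bop_bounded_linear[OF Z]]
  by (simp add: sqrt_series_def bop_scaleR[OF Z] funpow_commute[of Z Y, OF comm])

lemma sqrt_series_bop:
  assumes Y: "pos_contraction Y"
  shows "bop (sqrt_series Y)"
proof -
  have YN: "bop (Y ^^ n)" for n by (rule bop_funpow[OF pos_contraction_bop[OF Y]])
  have "sqrt_series Y (x + y) = sqrt_series Y x + sqrt_series Y y" for x y
    unfolding sqrt_series_def
    by (simp add: bop_add[OF YN] scaleR_add_right infsum_add sqrt_series_summable[OF Y])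
  moreover have "sqrt_series Y (scaleC a x) = scaleC a (sqrt_series Y x)" for a x
    using sqrt_series_apply_bop[OF Y bounded_linear_scaleC, of a x]
    by (simp add: sqrt_series_def bop_scaleC[OF YN] scaleR_scaleC scaleC_scaleC mult.commute)
  ultimately show ?thesis
    using sqrt_series_norm_le[OF Y] by (auto simp: bounded_op_def intro!: exI[of _ 1])
qed

lemma sqrt_series_cinner:
  assumes Y: "pos_contraction Y"
  shows "cinner (sqrt_series Y x) y =
    infsum (\<lambda>n. complex_of_real (sqrt_coeff n) * cinner ((Y ^^ n) x) y) UNIV"
  using sqrt_series_apply_bop[OF Y bounded_linear_cinner_left] by (simp add: cinner_scaleR_left)

lemma sqrt_series_selfadj:
  assumes Y: "pos_contraction Y"
  shows "selfadj (sqrt_series Y)"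
proof -
  have "cinner x (sqrt_series Y y) =
      infsum (\<lambda>n. complex_of_real (sqrt_coeff n) * cinner ((Y ^^ n) x) y) UNIV" for x y
    using sqrt_series_apply_bop[OF Y bounded_linear_cinner_right]
      selfadjD[OF selfadj_funpow[OF pos_contraction_selfadj[OF Y]]]
    by (simp add: cinner_scaleR_right)
  then show ?thesis by (simp add: selfadj_def sqrt_series_cinner[OF Y])
qed

lemma sqrt_series_Re_cinner:
  assumes Y: "pos_contraction Y"
  shows "Re (cinner (sqrt_series Y x) x) =
    infsum (\<lambda>n. sqrt_coeff n * Re (cinner ((Y ^^ n) x) x)) UNIV"
proof -
  have "(\<lambda>n. cinner (sqrt_coeff n *\<^sub>R (Y ^^ n) x) x) summable_on UNIV"
    by (rule summable_on_bounded_linear[OF bounded_linear_cinner_left sqrt_series_summable[OF Y]])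
  then have "(\<lambda>n. complex_of_real (sqrt_coeff n) * cinner ((Y ^^ n) x) x) summable_on UNIV"
    by (simp add: cinner_scaleR_left)
  from infsum_bounded_linear_summable[OF bounded_linear_Re this] show ?thesis
    by (simp add: sqrt_series_cinner[OF Y])
qed

lemma sqrt_series_pos_contraction:
  assumes Y: "pos_contraction Y"
  shows "pos_contraction (sqrt_series Y)"
proof -
  have "(\<lambda>n. sqrt_coeff n * Re (cinner ((Y ^^ n) x) x)) summable_on UNIV" for x
    using sqrt_coeff_summable_on_scaleR[of "\<lambda>n. Re (cinner ((Y ^^ n) x) x)" "(norm x)\<^sup>2" UNIV]
      pos_contraction_funpow_nonneg[OF Y] pos_contraction_funpow_le[OF Y]
    by simp
  then have "Re (cinner (sqrt_series Y x) x) \<le> infsum (\<lambda>n. sqrt_coeff n * (norm x)\<^sup>2) UNIV" for x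
    unfolding sqrt_series_Re_cinner[OF Y]
    by (rule infsum_mono[OF _ summable_on_cmult_left[OF sqrt_coeff_summable_on]])
       (simp add: pos_contraction_funpow_le[OF Y] sqrt_coeff_nonneg mult_left_mono)
  moreover have "0 \<le> Re (cinner (sqrt_series Y x) x)" for x
    unfolding sqrt_series_Re_cinner[OF Y]
    by (rule infsum_nonneg) (simp add: pos_contraction_funpow_nonneg[OF Y] sqrt_coeff_nonneg)
  ultimately show ?thesis
    using sqrt_series_bop[OF Y] sqrt_series_selfadj[OF Y]
    by (simp add: pos_contraction_def infsum_cmult_left sqrt_coeff_summable_on sqrt_coeff_infsum)
qed

text \<open>The functional equation 2 f = t + f^2 of the coefficients.\<close>

lemma sqrt_series_square:
  assumes Y: "pos_contraction Y"
  shows "sqrt_series Y (sqrt_series Y x) = 2 *\<^sub>R sqrt_series Y x - Y x"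
proof -
  have YN: "bop (Y ^^ k)" for k by (rule bop_funpow[OF pos_contraction_bop[OF Y]])
  have "(Y ^^ k) (sqrt_series Y x) = infsum (\<lambda>l. sqrt_coeff l *\<^sub>R (Y ^^ (k + l)) x) UNIV" for k
    using sqrt_series_apply_bop[OF Y bop_bounded_linear[OF YN]]
    by (simp add: bop_scaleR[OF YN] funpow_add)
  then have "sqrt_series Y (sqrt_series Y x) =
      infsum (\<lambda>k. sqrt_coeff k *\<^sub>R infsum (\<lambda>l. sqrt_coeff l *\<^sub>R (Y ^^ (k + l)) x) UNIV) UNIV"
    by (simp add: sqrt_series_def[of Y "sqrt_series Y x"])
  also have "\<dots> = 2 *\<^sub>R sqrt_series Y x - (Y ^^ 1) x"
    unfolding sqrt_series_def
    by (rule sqrt_coeff_series_square[of "\<lambda>j. (Y ^^ j) x" "norm x"])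
       (rule pos_contraction_funpow_norm_le[OF Y])
  finally show ?thesis by simp
qed

lemma sqrt_series_tail:
  assumes Y: "pos_contraction Y"
  shows "norm (sqrt_series Y x - (\<Sum>n<N. sqrt_coeff n *\<^sub>R (Y ^^ n) x)) \<le>
    (1 - (\<Sum>n<N. sqrt_coeff n)) * norm x"
proof -
  let ?f = "\<lambda>n. sqrt_coeff n *\<^sub>R (Y ^^ n) x"
  have "infsum ?f ({..<N} \<union> {N..}) = infsum ?f {..<N} + infsum ?f {N..}"
    by (rule infsum_Un_disjoint) (auto simp: sqrt_series_summable[OF Y])
  moreover have "{..<N} \<union> {N..} = (UNIV :: nat set)" by auto
  ultimately have "sqrt_series Y x - (\<Sum>n<N. ?f n) = infsum ?f {N..}"
    by (simp add: sqrt_series_def)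
  also have "norm \<dots> \<le> infsum sqrt_coeff {N..} * norm x"
    by (rule norm_sqrt_coeff_infsum_le) (rule pos_contraction_funpow_norm_le[OF Y])
  finally show ?thesis by (simp add: sqrt_coeff_infsum_tail)
qed

definition pos_sqrt :: "('h \<Rightarrow> 'h) \<Rightarrow> 'h \<Rightarrow> 'h" where
  "pos_sqrt H x = x - sqrt_series (\<lambda>y. y - H y) x"

lemma pos_sqrt_pos_contraction: "pos_contraction H \<Longrightarrow> pos_contraction (pos_sqrt H)"
  unfolding pos_sqrt_def[abs_def]
  by (intro pos_contraction_compl sqrt_series_pos_contraction pos_contraction_compl)

lemma pos_sqrt_square:
  assumes H: "pos_contraction H"
  shows "pos_sqrt H (pos_sqrt H x) = H x"
proof -
  let ?Y = "\<lambda>y. y - H y"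
  have Y: "pos_contraction ?Y" by (rule pos_contraction_compl[OF H])
  have "pos_sqrt H (pos_sqrt H x) =
      x - sqrt_series ?Y x - (sqrt_series ?Y x - sqrt_series ?Y (sqrt_series ?Y x))"
    by (simp add: pos_sqrt_def bop_diff[OF sqrt_series_bop[OF Y]])
  also have "\<dots> = H x" by (simp add: sqrt_series_square[OF Y] scaleR_2)
  finally show ?thesis .
qed

lemma pos_sqrt_commute:
  assumes H: "pos_contraction H" and Z: "bop Z" and comm: "\<And>x. Z (H x) = H (Z x)"
  shows "Z (pos_sqrt H x) = pos_sqrt H (Z x)"
proof -
  have "Z (y - H y) = Z y - H (Z y)" for y by (simp add: bop_diff[OF Z] comm)
  then show ?thesis
    by (simp add: pos_sqrt_def bop_diff[OF Z] sqrt_series_commute[OF pos_contraction_compl[OF H] Z])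
qed

abbreviation vna where "vna R \<equiv> von_neumann_algebra scaleC cinner R"

lemma vna_bop: "vna R \<Longrightarrow> T \<in> R \<Longrightarrow> bop T"
  by (simp add: von_neumann_algebra_def)

lemma vna_comp: "vna R \<Longrightarrow> S \<in> R \<Longrightarrow> T \<in> R \<Longrightarrow> (\<lambda>x. S (T x)) \<in> R"
  by (auto simp: von_neumann_algebra_def comp_def)

lemma vna_adjoint: "vna R \<Longrightarrow> T \<in> R \<Longrightarrow> \<exists>S\<in>R. \<forall>x y. cinner (T x) y = cinner x (S y)"
  by (simp add: von_neumann_algebra_def)

lemma vna_left_ideal:
  assumes "vna R"
  shows "left_ideal scaleC R R"
proof -
  have "(\<lambda>x. scaleC 0 (id x)) \<in> R" using assms unfolding von_neumann_algebra_def by blast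
  then have "(\<lambda>x. 0) \<in> R" by simp
  then show ?thesis using assms by (simp add: left_ideal_def von_neumann_algebra_def)
qed

lemma vna_id: "vna R \<Longrightarrow> (\<lambda>x. x) \<in> R"
  by (simp add: von_neumann_algebra_def id_def[symmetric])

lemma left_ideal_subset: "left_ideal scaleC R I \<Longrightarrow> T \<in> I \<Longrightarrow> T \<in> R"
  by (auto simp: left_ideal_def)

lemma left_ideal_zero: "left_ideal scaleC R I \<Longrightarrow> (\<lambda>x. 0) \<in> I"
  by (simp add: left_ideal_def)

lemma left_ideal_add: "left_ideal scaleC R I \<Longrightarrow> S \<in> I \<Longrightarrow> T \<in> I \<Longrightarrow> (\<lambda>x. S x + T x) \<in> I"
  by (simp add: left_ideal_def)

lemma left_ideal_scaleC: "left_ideal scaleC R I \<Longrightarrow> T \<in> I \<Longrightarrow> (\<lambda>x. scaleC a (T x)) \<in> I"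
  by (simp add: left_ideal_def)

lemma left_ideal_scaleR: "left_ideal scaleC R I \<Longrightarrow> T \<in> I \<Longrightarrow> (\<lambda>x. r *\<^sub>R T x) \<in> I"
  by (simp add: left_ideal_scaleC scaleR_scaleC)

lemma left_ideal_comp: "left_ideal scaleC R I \<Longrightarrow> A \<in> R \<Longrightarrow> T \<in> I \<Longrightarrow> (\<lambda>x. A (T x)) \<in> I"
  by (auto simp: left_ideal_def comp_def)

lemma left_ideal_diff: "left_ideal scaleC R I \<Longrightarrow> S \<in> I \<Longrightarrow> T \<in> I \<Longrightarrow> (\<lambda>x. S x - T x) \<in> I"
  using left_ideal_add[of R I S "\<lambda>x. (-1) *\<^sub>R T x"] left_ideal_scaleR[of R I T "-1"] by simp

lemma vna_compl: "vna R \<Longrightarrow> H \<in> R \<Longrightarrow> (\<lambda>x. x - H x) \<in> R"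
  using left_ideal_diff[OF vna_left_ideal vna_id] by blast

lemma vna_funpow: "vna R \<Longrightarrow> T \<in> R \<Longrightarrow> T ^^ n \<in> R"
  by (induction n) (simp_all add: id_def[symmetric] vna_comp[unfolded comp_def[symmetric]] von_neumann_algebra_def)

lemma left_ideal_sum:
  "left_ideal scaleC R I \<Longrightarrow> (\<And>i. i \<in> A \<Longrightarrow> T i \<in> I) \<Longrightarrow> (\<lambda>x. \<Sum>i\<in>A. T i x) \<in> I"
proof (induction A rule: infinite_finite_induct)
  case (insert a A)
  then show ?case using left_ideal_add[of R I "T a" "\<lambda>x. \<Sum>i\<in>A. T i x"] by simp
qed (simp_all add: left_ideal_zero)

lemma left_ideal_generated_least:
  "left_ideal scaleC R J \<Longrightarrow> F \<subseteq> J \<Longrightarrow> left_ideal_generated scaleC R F \<subseteq> J"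
  by (auto simp: left_ideal_generated_def)

lemma left_ideal_generated_superset: "F \<subseteq> left_ideal_generated scaleC R F"
  by (auto simp: left_ideal_generated_def)

definition left_combinations :: "('h \<Rightarrow> 'h) set \<Rightarrow> ('h \<Rightarrow> 'h) set \<Rightarrow> ('h \<Rightarrow> 'h) set" where
  "left_combinations R F = {T. \<exists>B. (\<forall>a\<in>F. B a \<in> R) \<and> T = (\<lambda>x. \<Sum>a\<in>F. B a (a x))}"

lemma left_ideal_left_combinations:
  assumes R: "vna R" and F: "F \<subseteq> R"
  shows "left_ideal scaleC R (left_combinations R F)"
  unfolding left_ideal_def
proof (intro conjI ballI allI)
  have RR: "left_ideal scaleC R R" by (rule vna_left_ideal[OF R])
  show "left_combinations R F \<subseteq> R"
  proof
    fix T assume "T \<in> left_combinations R F"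
    then obtain B where B: "\<forall>a\<in>F. B a \<in> R" "T = (\<lambda>x. \<Sum>a\<in>F. B a (a x))"
      by (auto simp: left_combinations_def)
    show "T \<in> R" unfolding B(2)
      by (rule left_ideal_sum[OF RR]) (use B(1) F in \<open>auto intro: vna_comp[OF R]\<close>)
  qed
  show "(\<lambda>x. 0) \<in> left_combinations R F"
    unfolding left_combinations_def using left_ideal_zero[OF RR] by (auto intro!: exI[of _ "\<lambda>a x. 0"])
  fix S T assume "S \<in> left_combinations R F" "T \<in> left_combinations R F"
  then obtain B B' where B: "\<forall>a\<in>F. B a \<in> R" "S = (\<lambda>x. \<Sum>a\<in>F. B a (a x))"
    and B': "\<forall>a\<in>F. B' a \<in> R" "T = (\<lambda>x. \<Sum>a\<in>F. B' a (a x))" by (auto simp: left_combinations_def)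
  show "(\<lambda>x. S x + T x) \<in> left_combinations R F" unfolding left_combinations_def
    by (rule CollectI, rule exI[of _ "\<lambda>a x. B a x + B' a x"])
       (use B B' in \<open>auto intro: left_ideal_add[OF RR] simp: sum.distrib\<close>)
next
  have RR: "left_ideal scaleC R R" by (rule vna_left_ideal[OF R])
  fix c T assume "T \<in> left_combinations R F"
  then obtain B where B: "\<forall>a\<in>F. B a \<in> R" "T = (\<lambda>x. \<Sum>a\<in>F. B a (a x))"
    by (auto simp: left_combinations_def)
  have sc: "bop (\<lambda>x. scaleC c x)" using bop_scaleC_op[of "\<lambda>x. x" c] by simp
  show "(\<lambda>x. scaleC c (T x)) \<in> left_combinations R F" unfolding left_combinations_def
    by (rule CollectI, rule exI[of _ "\<lambda>a x. scaleC c (B a x)"])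
       (use B in \<open>auto intro: left_ideal_scaleC[OF RR] simp: bop_sum[OF sc]\<close>)
next
  fix A T assume A: "A \<in> R" and "T \<in> left_combinations R F"
  then obtain B where B: "\<forall>a\<in>F. B a \<in> R" "T = (\<lambda>x. \<Sum>a\<in>F. B a (a x))"
    by (auto simp: left_combinations_def)
  show "A \<circ> T \<in> left_combinations R F" unfolding left_combinations_def
    by (rule CollectI, rule exI[of _ "\<lambda>a x. A (B a x)"])
       (use B A in \<open>auto intro: vna_comp[OF R] simp: bop_sum[OF vna_bop[OF R A]] comp_def\<close>)
qed

lemma left_combinations_superset:
  assumes R: "vna R" and F: "finite F"
  shows "F \<subseteq> left_combinations R F"
proof
  fix f assume f: "f \<in> F"
  define B where "B = (\<lambda>a. if a = f then (\<lambda>x::'h. x) else (\<lambda>x. 0))"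
  have "\<forall>a\<in>F. B a \<in> R" using vna_id[OF R] left_ideal_zero[OF vna_left_ideal[OF R]] by (auto simp: B_def)
  moreover have "f = (\<lambda>x. \<Sum>a\<in>F. B a (a x))"
  proof
    fix x
    have "(\<Sum>a\<in>F. B a (a x)) = (\<Sum>a\<in>F. if a = f then a x else 0)"
      by (rule sum.cong) (auto simp: B_def)
    also have "\<dots> = f x" using f F by (simp add: sum.delta')
    finally show "f x = (\<Sum>a\<in>F. B a (a x))" by simp
  qed
  ultimately show "f \<in> left_combinations R F" unfolding left_combinations_def by blast
qed

lemma left_ideal_generated_representation:
  assumes R: "vna R" and F: "finite F" "F \<subseteq> R" and T: "T \<in> left_ideal_generated scaleC R F"
  obtains B where "\<And>a. a \<in> F \<Longrightarrow> B a \<in> R" "T = (\<lambda>x. \<Sum>a\<in>F. B a (a x))"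
proof -
  have "T \<in> left_combinations R F"
    using T left_ideal_generated_least[OF left_ideal_left_combinations[OF R F(2)]
        left_combinations_superset[OF R F(1)]]
    by blast
  then show ?thesis using that by (auto simp: left_combinations_def)
qed

lemma left_ideal_generated_vanishes:
  assumes R: "vna R" and F: "F \<subseteq> R" and T: "T \<in> left_ideal_generated scaleC R F"
    and x: "\<And>a. a \<in> F \<Longrightarrow> a x = 0"
  shows "T x = 0"
proof -
  define J where "J = {T \<in> R. \<forall>x. (\<forall>a\<in>F. a x = 0) \<longrightarrow> T x = 0}"
  have "left_ideal scaleC R J"
    using vna_left_ideal[OF R] vna_bop[OF R]
    by (auto simp: left_ideal_def J_def comp_def)
  moreover have "F \<subseteq> J" using F by (auto simp: J_def)
  ultimately have "T \<in> J" using T left_ideal_generated_least by blast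
  then show ?thesis using x by (auto simp: J_def)
qed

lemma left_ideal_generated_norm_bound:
  assumes R: "vna R" and F: "finite F" "F \<subseteq> R" and T: "T \<in> left_ideal_generated scaleC R F"
  obtains C where "C \<ge> 0" "\<And>x. (norm (T x))\<^sup>2 \<le> C * (\<Sum>a\<in>F. (norm (a x))\<^sup>2)"
proof -
  obtain B where B: "\<And>a. a \<in> F \<Longrightarrow> B a \<in> R" "T = (\<lambda>x. \<Sum>a\<in>F. B a (a x))"
    using left_ideal_generated_representation[OF R F T] by blast
  have "\<forall>a\<in>F. \<exists>K. K > 0 \<and> (\<forall>x. norm (B a x) \<le> K * norm x)"
    using bop_bound[OF vna_bop[OF R B(1)]] by metis
  then obtain K where K: "\<And>a. a \<in> F \<Longrightarrow> K a > 0" "\<And>a x. a \<in> F \<Longrightarrow> norm (B a x) \<le> K a * norm x"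
    by metis
  define G where "G = (\<Sum>a\<in>F. K a)"
  have "(norm (T x))\<^sup>2 \<le> G\<^sup>2 * (\<Sum>a\<in>F. (norm (a x))\<^sup>2)" for x
  proof -
    define s where "s = sqrt (\<Sum>a\<in>F. (norm (a x))\<^sup>2)"
    have a: "norm (a x) \<le> s" if "a \<in> F" for a
      using member_le_sum[OF that, of "\<lambda>a. (norm (a x))\<^sup>2"] F(1) by (simp add: s_def real_le_rsqrt)
    have "norm (T x) \<le> (\<Sum>a\<in>F. norm (B a (a x)))" unfolding B(2) by (rule norm_sum)
    also have "\<dots> \<le> (\<Sum>a\<in>F. K a * s)"
      using K a by (intro sum_mono order_trans[OF K(2)] mult_left_mono) (auto intro: less_imp_le)
    also have "\<dots> = G * s" by (simp add: G_def sum_distrib_right)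
    finally have "(norm (T x))\<^sup>2 \<le> (G * s)\<^sup>2" by (intro power_mono) auto
    then show ?thesis by (simp add: s_def sum_nonneg power_mult_distrib)
  qed
  then show ?thesis using that[of "G\<^sup>2"] by simp
qed

lemma norm_closedI:
  assumes "norm_closed scaleC S" "bop T"
    and "\<And>\<epsilon>. \<epsilon> > 0 \<Longrightarrow> \<exists>A\<in>S. \<forall>x. norm (T x - A x) \<le> \<epsilon> * norm x"
  shows "T \<in> S"
  using assms unfolding norm_closed_def by blast

lemma sum_square_norms_bound:
  assumes F: "finite F" and bop: "\<And>a. a \<in> F \<Longrightarrow> bop a"
  obtains M where "M \<ge> 1" "\<And>x. (\<Sum>a\<in>F. (norm (a x))\<^sup>2) \<le> M * (norm x)\<^sup>2"
proof -
  have "\<forall>a\<in>F. \<exists>K. \<forall>x. norm (a x) \<le> K * norm x"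
    using bop by (auto simp: bounded_op_def)
  then obtain K where K: "\<And>a x. a \<in> F \<Longrightarrow> norm (a x) \<le> K a * norm x"
    by metis
  define M where "M = 1 + (\<Sum>a\<in>F. (K a)\<^sup>2)"
  have "(\<Sum>a\<in>F. (norm (a x))\<^sup>2) \<le> M * (norm x)\<^sup>2" for x
  proof -
    have "(\<Sum>a\<in>F. (norm (a x))\<^sup>2) \<le> (\<Sum>a\<in>F. (K a)\<^sup>2 * (norm x)\<^sup>2)"
      using K by (intro sum_mono) (simp add: power_mult_distrib[symmetric] power_mono)
    also have "\<dots> \<le> M * (norm x)\<^sup>2" by (simp add: M_def sum_distrib_right[symmetric] mult_right_mono)
    finally show ?thesis .
  qed
  moreover have "M \<ge> 1" unfolding M_def by (simp add: sum_nonneg)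
  ultimately show ?thesis using that by blast
qed

lemma positive_generator:
  assumes R: "vna R" and I: "left_ideal scaleC R I" and F: "finite F" "F \<subseteq> R" "F \<subseteq> I"
  obtains H M where "H \<in> I" "pos_contraction H" "M > 0"
    "\<And>x. Re (cinner (H x) x) = (\<Sum>a\<in>F. (norm (a x))\<^sup>2) / M"
proof -
  have "\<forall>a\<in>F. \<exists>S\<in>R. \<forall>x y. cinner (a x) y = cinner x (S y)"
    using vna_adjoint[OF R] F(2) by blast
  then obtain adj where adj: "\<And>a. a \<in> F \<Longrightarrow> adj a \<in> R"
    "\<And>a x y. a \<in> F \<Longrightarrow> cinner (a x) y = cinner x (adj a y)"
    by metis
  obtain M where M: "M \<ge> 1" and bound: "\<And>x. (\<Sum>a\<in>F. (norm (a x))\<^sup>2) \<le> M * (norm x)\<^sup>2"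
    using sum_square_norms_bound[OF F(1)] vna_bop[OF R] F(2) by blast
  define H where "H x = (1 / M) *\<^sub>R (\<Sum>a\<in>F. adj a (a x))" for x
  have HI: "H \<in> I"
    unfolding H_def
  proof (rule left_ideal_scaleR[OF I], rule left_ideal_sum[OF I])
    fix a assume "a \<in> F"
    then show "(\<lambda>x. adj a (a x)) \<in> I" using F(3) by (intro left_ideal_comp[OF I adj(1)]) auto
  qed
  have cinner_H: "cinner (H x) y = complex_of_real (1 / M) * (\<Sum>a\<in>F. cinner (a x) (a y))" for x y
  proof -
    have "cinner (adj a (a x)) y = cinner (a x) (a y)" if "a \<in> F" for a
      using adj(2)[OF that, of y "a x"] cinner_commute[of "adj a (a x)" y] cinner_commute[of "a x" "a y"]
      by simp
    then show ?thesis by (simp add: H_def cinner_scaleR_left cinner_sum_left)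
  qed
  have "cinner x (H y) = complex_of_real (1 / M) * (\<Sum>a\<in>F. cinner x (adj a (a y)))" for x y
    by (simp add: H_def cinner_scaleR_right cinner_sum_right)
  then have "cinner (H x) y = cinner x (H y)" for x y
    using adj(2) by (simp add: cinner_H)
  then have selfadj: "selfadj H" by (simp add: selfadj_def)
  have Re_H: "Re (cinner (H x) x) = (\<Sum>a\<in>F. (norm (a x))\<^sup>2) / M" for x
    by (simp add: cinner_H Re_cinner_self)
  have "pos_contraction H"
    using bound M vna_bop[OF R left_ideal_subset[OF I HI]] selfadj
    unfolding pos_contraction_def Re_H by (simp add: sum_nonneg pos_divide_le_eq mult.commute)
  moreover have "M > 0" using M by simp
  ultimately show ?thesis using HI Re_H by (intro that) simp_all
qed

lemma left_ideal_compl_funpow: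
  assumes R: "vna R" and I: "left_ideal scaleC R I" and H: "bop H" "H \<in> I"
  shows "(\<lambda>x. x - ((\<lambda>y. y - H y) ^^ n) x) \<in> I"
proof (induction n)
  case (Suc n)
  let ?Y = "\<lambda>y. y - H y"
  have "?Y ^^ n \<in> R" by (rule vna_funpow[OF R vna_compl[OF R left_ideal_subset[OF I H(2)]]])
  then have "(\<lambda>x. (x - (?Y ^^ n) x) + (?Y ^^ n) (H x)) \<in> I"
    by (rule left_ideal_add[OF I Suc left_ideal_comp[OF I _ H(2)]])
  moreover have "(x - (?Y ^^ n) x) + (?Y ^^ n) (H x) = x - (?Y ^^ Suc n) x" for x
    using bop_diff[OF bop_funpow[OF bop_diff_op[OF bop_id H(1)]], of n x "H x"]
    by (simp only: funpow_Suc_right comp_apply) simp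
  ultimately show ?case by simp
qed (simp add: left_ideal_zero[OF I])

lemma pos_sqrt_in_ideal:
  assumes R: "vna R" and I: "left_ideal scaleC R I" and closed: "norm_closed scaleC I"
    and H: "pos_contraction H" "H \<in> I"
  shows "pos_sqrt H \<in> I"
proof -
  let ?Y = "\<lambda>x. x - H x"
  have Y: "pos_contraction ?Y" by (rule pos_contraction_compl[OF H(1)])
  have compl_pow: "(\<lambda>x. x - (?Y ^^ n) x) \<in> I" for n
    by (rule left_ideal_compl_funpow[OF R I pos_contraction_bop[OF H(1)] H(2)])
  show ?thesis
  proof (rule norm_closedI[OF closed])
    show "bop (pos_sqrt H)" by (rule pos_contraction_bop[OF pos_sqrt_pos_contraction[OF H(1)]])
    fix \<epsilon> :: real assume "\<epsilon> > 0"
    then obtain N where "norm ((\<Sum>n<N. sqrt_coeff n) - 1) < \<epsilon> / 2"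
      using LIMSEQ_D[OF sqrt_coeff_psum_tendsto, of "\<epsilon> / 2"] by auto
    then have N: "1 - (\<Sum>n<N. sqrt_coeff n) < \<epsilon> / 2" by (simp only: real_norm_def)
    let ?A = "\<lambda>x. \<Sum>n<N. sqrt_coeff n *\<^sub>R (x - (?Y ^^ n) x)"
    have "?A \<in> I" by (intro left_ideal_sum[OF I] left_ideal_scaleR[OF I] compl_pow)
    moreover have "norm (pos_sqrt H x - ?A x) \<le> \<epsilon> * norm x" for x
    proof -
      have "pos_sqrt H x - ?A x =
          (1 - (\<Sum>n<N. sqrt_coeff n)) *\<^sub>R x - (sqrt_series ?Y x - (\<Sum>n<N. sqrt_coeff n *\<^sub>R (?Y ^^ n) x))"
        by (simp add: pos_sqrt_def scaleR_diff_right sum_subtractf scaleR_sum_left algebra_simps)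
      then have "norm (pos_sqrt H x - ?A x) \<le>
          (1 - (\<Sum>n<N. sqrt_coeff n)) * norm x + (1 - (\<Sum>n<N. sqrt_coeff n)) * norm x"
        using norm_triangle_ineq4 sqrt_series_tail[OF Y, of x N] sqrt_coeff_psum_le_1[of N]
        by (smt (verit) norm_scaleR)
      also have "\<dots> \<le> \<epsilon> * norm x"
        using N by (simp add: mult_right_mono flip: distrib_right)
      finally show ?thesis .
    qed
    ultimately show "\<exists>A\<in>I. \<forall>x. norm (pos_sqrt H x - A x) \<le> \<epsilon> * norm x"
      by (intro bexI[where x = ?A] allI)
  qed
qed

lemma pos_contraction_square_le:
  assumes H: "pos_contraction H"
  shows "(norm (H w))\<^sup>2 \<le> Re (cinner (H w) w)"
proof -
  let ?S = "pos_sqrt H"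
  have S: "pos_contraction ?S" by (rule pos_sqrt_pos_contraction[OF H])
  have "norm (H w) \<le> norm (?S w)"
    using pos_contraction_norm_le[OF S, of "?S w"] by (simp add: pos_sqrt_square[OF H])
  then have "(norm (H w))\<^sup>2 \<le> (norm (?S w))\<^sup>2" by (simp add: power_mono)
  also have "\<dots> = Re (cinner (H w) w)"
    using selfadj_square_norm[OF pos_contraction_selfadj[OF S]] by (simp add: pos_sqrt_square[OF H])
  finally show ?thesis .
qed

text \<open>A spectral-gap inequality T <= K T^2 passes to T^2 <= K T^3 by conjugating with a
  square root Q of T.\<close>

lemma gap_shift:
  assumes T: "selfadj T" and Q: "selfadj Q" and QQ: "\<And>x. Q (Q x) = T x"
    and QT: "\<And>x. Q (T x) = T (Q x)"
    and gap: "\<And>x. Re (cinner (T x) x) \<le> K * Re (cinner (T (T x)) x)"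
  shows "Re (cinner (T (T x)) x) \<le> K * Re (cinner (T (T (T x))) x)"
proof -
  have conj: "cinner (A (Q x)) (Q x) = cinner (A (T x)) x" if "\<And>y. Q (A y) = A (Q y)" for A
    using selfadjD[OF Q, of "A (Q x)" x] that[of "Q x"] by (simp add: QQ)
  have "Re (cinner (T (T x)) x) = Re (cinner (T (Q x)) (Q x))" using conj[of T] QT by simp
  also have "\<dots> \<le> K * Re (cinner (T (T (Q x))) (Q x))" by (rule gap)
  also have "\<dots> = K * Re (cinner (T (T (T x))) x)" using conj[of "\<lambda>y. T (T y)"] QT by simp
  finally show ?thesis .
qed

lemma gap_of_fourth_root:
  assumes S: "selfadj S" and Q: "selfadj Q" and H: "selfadj H"
    and QQ: "\<And>x. Q (Q x) = S x" and QS: "\<And>x. Q (S x) = S (Q x)" and SS: "\<And>x. S (S x) = H x"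
    and K: "K \<ge> 0" and gap: "\<And>x. Re (cinner (S x) x) \<le> K * Re (cinner (S (S x)) x)"
  shows "Re (cinner (H (H x)) x) \<le> K\<^sup>2 * Re (cinner (H (H (H x))) x)"
proof -
  have H_gap: "Re (cinner (H y) y) \<le> K\<^sup>2 * Re (cinner (H (H y)) y)" for y
  proof -
    have "Re (cinner (S (S y)) y) \<le> K * Re (cinner (S (S (S y))) y)"
      by (rule gap_shift[OF S Q QQ QS gap])
    also have "Re (cinner (S (S (S y))) y) \<le> K * Re (cinner (S (S (S (S y)))) y)"
      using gap[of "S y"] selfadjD[OF S, of "S (S y)" y] selfadjD[OF S, of "S (S (S y))" y] by simp
    then have "K * Re (cinner (S (S (S y))) y) \<le> K * (K * Re (cinner (S (S (S (S y)))) y))"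
      using K by (rule mult_left_mono)
    finally show ?thesis by (simp add: SS power2_eq_square)
  qed
  show ?thesis
    by (rule gap_shift[OF H S SS _ H_gap]) (metis SS)
qed

lemma compl_contracts_range:
  assumes H: "pos_contraction H" and K: "K > 0"
    and gap: "\<And>z. Re (cinner (H (H z)) z) \<le> K * Re (cinner (H (H (H z))) z)"
  shows "(norm (H z - H (H z)))\<^sup>2 \<le> (1 - 1 / K) * (norm (H z))\<^sup>2"
proof -
  let ?w = "H z"
  have "(norm ?w)\<^sup>2 \<le> K * Re (cinner (H ?w) ?w)"
    using gap[of z] selfadj_square_norm[OF pos_contraction_selfadj[OF H], of z]
      selfadjD[OF pos_contraction_selfadj[OF H], of "H ?w" z]
    by simp
  then have "(norm ?w)\<^sup>2 / K \<le> Re (cinner (H ?w) ?w)"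
    using K by (simp add: divide_le_eq mult.commute)
  moreover have "(norm (?w - H ?w))\<^sup>2 \<le> (norm ?w)\<^sup>2 - Re (cinner (H ?w) ?w)"
    using pos_contraction_square_le[OF H, of ?w] Re_cinner_commute[of ?w "H ?w"]
    by (simp add: norm_diff_square)
  ultimately show ?thesis by (simp add: algebra_simps)
qed

lemma compl_funpow_range_decay:
  assumes H: "pos_contraction H" and r: "0 \<le> r"
    and contr: "\<And>z. (norm (H z - H (H z)))\<^sup>2 \<le> r * (norm (H z))\<^sup>2"
  shows "norm (((\<lambda>y. y - H y) ^^ n) (H z)) \<le> sqrt r ^ n * norm (H z)"
proof (induction n)
  case (Suc n)
  let ?Y = "\<lambda>y. y - H y"
  have comm: "H ((?Y ^^ n) z) = (?Y ^^ n) (H z)"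
    by (rule funpow_commute) (simp add: bop_diff[OF pos_contraction_bop[OF H]])
  have "(norm ((?Y ^^ Suc n) (H z)))\<^sup>2 \<le> r * (norm ((?Y ^^ n) (H z)))\<^sup>2"
    using contr[of "(?Y ^^ n) z"] comm by simp
  then have "norm ((?Y ^^ Suc n) (H z)) \<le> sqrt r * norm ((?Y ^^ n) (H z))"
    using real_sqrt_le_mono by (fastforce simp: real_sqrt_mult)
  also have "\<dots> \<le> sqrt r * (sqrt r ^ n * norm (H z))"
    using Suc by (rule mult_left_mono) (simp add: r)
  finally show ?case by (simp add: mult.assoc)
qed simp

lemma compl_funpow_diff:
  assumes "bop H"
  shows "x - ((\<lambda>y. y - H y) ^^ k) x = H (\<Sum>j<k. ((\<lambda>y. y - H y) ^^ j) x)"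
  by (induction k) (simp_all add: bop_add[OF assms] bop_zero[OF assms] algebra_simps)

lemma compl_funpow_Cauchy_bound:
  assumes H: "pos_contraction H" and r: "0 \<le> r"
    and contr: "\<And>z. (norm (H z - H (H z)))\<^sup>2 \<le> r * (norm (H z))\<^sup>2"
  shows "norm (((\<lambda>y. y - H y) ^^ n) x - ((\<lambda>y. y - H y) ^^ (n + k)) x) \<le> 2 * sqrt r ^ n * norm x"
proof -
  let ?Y = "\<lambda>y. y - H y"
  let ?s = "\<Sum>j<k. (?Y ^^ j) x"
  have Y: "pos_contraction ?Y" by (rule pos_contraction_compl[OF H])
  have "(?Y ^^ n) x - (?Y ^^ (n + k)) x = (?Y ^^ n) (x - (?Y ^^ k) x)"
    by (simp add: funpow_add bop_diff[OF bop_funpow[OF pos_contraction_bop[OF Y]]])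
  also have "\<dots> = (?Y ^^ n) (H ?s)"
    by (simp only: compl_funpow_diff[OF pos_contraction_bop[OF H]])
  finally have "(?Y ^^ n) x - (?Y ^^ (n + k)) x = (?Y ^^ n) (H ?s)" .
  then have "norm ((?Y ^^ n) x - (?Y ^^ (n + k)) x) \<le> sqrt r ^ n * norm (x - (?Y ^^ k) x)"
    using compl_funpow_range_decay[OF H r contr, of n ?s]
      compl_funpow_diff[OF pos_contraction_bop[OF H], of x k]
    by simp
  also have "\<dots> \<le> sqrt r ^ n * (2 * norm x)"
    using norm_triangle_ineq4[of x "(?Y ^^ k) x"] pos_contraction_funpow_norm_le[OF Y, of k x] r
    by (intro mult_left_mono) simp_all
  finally show ?thesis by (simp add: mult_ac)
qed

lemma compl_funpow_converges_to_kernel: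
  assumes H: "pos_contraction H" and r: "0 \<le> r" "r < 1"
    and contr: "\<And>z. (norm (H z - H (H z)))\<^sup>2 \<le> r * (norm (H z))\<^sup>2"
  obtains p where "H p = 0" "\<And>n. norm (((\<lambda>y. y - H y) ^^ n) x - p) \<le> 2 * sqrt r ^ n * norm x"
proof -
  let ?X = "\<lambda>n. ((\<lambda>y. y - H y) ^^ n) x"
  have hb: "bop H" by (rule pos_contraction_bop[OF H])
  have "norm (?X n - ?X (n + k)) \<le> 2 * norm x * sqrt r ^ n" for n k
    using compl_funpow_Cauchy_bound[OF H r(1) contr] by (simp add: mult_ac)
  then obtain p where p: "?X \<longlonglongrightarrow> p" "\<And>n. norm (?X n - p) \<le> 2 * norm x * sqrt r ^ n"
    by (rule geometric_Cauchy_converges[where q = "sqrt r", rotated 2]) (use r in auto)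
  have "H p = 0"
  proof (rule LIMSEQ_unique)
    show "(\<lambda>n. H (?X n)) \<longlonglongrightarrow> H p" by (rule bounded_linear.tendsto[OF bop_bounded_linear[OF hb] p(1)])
    have "H (?X n) = ((\<lambda>y. y - H y) ^^ n) (H x)" for n
      by (rule funpow_commute) (simp add: bop_diff[OF hb])
    then have decay: "norm (H (?X n)) \<le> sqrt r ^ n * norm (H x)" for n
      using compl_funpow_range_decay[OF H r(1) contr, of n x] by simp
    show "(\<lambda>n. H (?X n)) \<longlonglongrightarrow> 0"
    proof (rule Lim_null_comparison)
      show "\<forall>\<^sub>F n in sequentially. norm (H (?X n)) \<le> sqrt r ^ n * norm (H x)"
        by (simp add: decay)
      show "(\<lambda>n. sqrt r ^ n * norm (H x)) \<longlonglongrightarrow> 0"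
        using tendsto_mult[OF LIMSEQ_power_zero[of "sqrt r"] tendsto_const[of "norm (H x)"]] r by simp
    qed
  qed
  with p(2) show ?thesis using that by (simp add: mult_ac)
qed

lemma kernel_annihilator_in_ideal:
  assumes R: "vna R" and I: "left_ideal scaleC R I" and closed: "norm_closed scaleC I"
    and H: "pos_contraction H" "H \<in> I" and r: "0 \<le> r" "r < 1"
    and contr: "\<And>z. (norm (H z - H (H z)))\<^sup>2 \<le> r * (norm (H z))\<^sup>2"
    and T: "T \<in> R" and T_ker: "\<And>p. H p = 0 \<Longrightarrow> T p = 0"
  shows "T \<in> I"
proof (rule norm_closedI[OF closed])
  let ?Y = "\<lambda>y. y - H y"
  have hb: "bop H" by (rule pos_contraction_bop[OF H(1)])
  have tb: "bop T" by (rule vna_bop[OF R T])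
  then show "bop T" .
  obtain K where K: "K > 0" "\<And>x. norm (T x) \<le> K * norm x" using bop_bound[OF tb] by blast
  fix \<epsilon> :: real assume "\<epsilon> > 0"
  have "(\<lambda>n. 2 * K * sqrt r ^ n) \<longlonglongrightarrow> 2 * K * 0"
    using r by (intro tendsto_mult tendsto_const LIMSEQ_power_zero) simp
  from LIMSEQ_D[OF this \<open>\<epsilon> > 0\<close>] obtain n where "norm (2 * K * sqrt r ^ n - 2 * K * 0) < \<epsilon>"
    by blast
  then have n: "2 * K * sqrt r ^ n < \<epsilon>" using abs_ge_self[of "2 * K * sqrt r ^ n"] by simp
  define G where "G y = T (\<Sum>j<n. (?Y ^^ j) y)" for y
  have "G \<in> R"
    unfolding G_def using vna_funpow[OF R vna_compl[OF R left_ideal_subset[OF I H(2)]]]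
    by (intro vna_comp[OF R T] left_ideal_sum[OF vna_left_ideal[OF R]])
  then have "(\<lambda>x. G (H x)) \<in> I" by (rule left_ideal_comp[OF I _ H(2)])
  moreover have "norm (T x - G (H x)) \<le> \<epsilon> * norm x" for x
  proof -
    obtain p where p: "H p = 0" "\<And>n. norm ((?Y ^^ n) x - p) \<le> 2 * sqrt r ^ n * norm x"
      using compl_funpow_converges_to_kernel[OF H(1) r contr] by blast
    have "(\<Sum>j<n. (?Y ^^ j) (H x)) = H (\<Sum>j<n. (?Y ^^ j) x)"
      by (simp add: bop_sum[OF hb] funpow_commute[of H ?Y] bop_diff[OF hb])
    then have "G (H x) = T x - T ((?Y ^^ n) x)"
      by (simp add: G_def compl_funpow_diff[OF hb, symmetric] bop_diff[OF tb])
    also have "T ((?Y ^^ n) x) = T ((?Y ^^ n) x - p)" by (simp add: bop_diff[OF tb] T_ker[OF p(1)])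
    finally have "norm (T x - G (H x)) \<le> K * norm ((?Y ^^ n) x - p)" using K(2) by simp
    also have "\<dots> \<le> K * (2 * sqrt r ^ n * norm x)" using p(2)[of n] K(1) by simp
    also have "\<dots> \<le> \<epsilon> * norm x" using n by (simp add: mult_right_mono flip: mult.assoc)
    finally show ?thesis .
  qed
  ultimately show "\<exists>A\<in>I. \<forall>x. norm (T x - A x) \<le> \<epsilon> * norm x"
    by (intro bexI[where x = "\<lambda>x. G (H x)"] allI)
qed

text \<open>The square root S and fourth root Q of H lie in I, so Q is a combination of F, which gives
  S <= K S^2.\<close>

lemma generator_spectral_gap:
  assumes R: "vna R" and I: "left_ideal scaleC R I" and closed: "norm_closed scaleC I"
    and F: "finite F" "F \<subseteq> R" and I_gen: "I = left_ideal_generated scaleC R F"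
    and H: "H \<in> I" "pos_contraction H" and M: "M > 0"
    and Re_H: "\<And>x. Re (cinner (H x) x) = (\<Sum>a\<in>F. (norm (a x))\<^sup>2) / M"
  obtains K where "K \<ge> 1" "\<And>x. Re (cinner (H (H x)) x) \<le> K * Re (cinner (H (H (H x))) x)"
proof -
  define S where "S = pos_sqrt H"
  define Q where "Q = pos_sqrt S"
  have S: "pos_contraction S" "S \<in> I"
    using pos_sqrt_pos_contraction[OF H(2)] pos_sqrt_in_ideal[OF R I closed H(2,1)] by (simp_all add: S_def)
  have Q: "pos_contraction Q" "Q \<in> I"
    using pos_sqrt_pos_contraction[OF S(1)] pos_sqrt_in_ideal[OF R I closed S] by (simp_all add: Q_def)
  obtain C where C: "C \<ge> 0" "\<And>x. (norm (Q x))\<^sup>2 \<le> C * (\<Sum>a\<in>F. (norm (a x))\<^sup>2)"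
    using left_ideal_generated_norm_bound[OF R F] Q(2) I_gen by blast
  define K where "K = C * M + 1"
  have K: "K \<ge> 1" using C(1) M by (simp add: K_def)
  have SS: "S (S x) = H x" and QQ: "Q (Q x) = S x" for x
    by (simp_all add: S_def Q_def pos_sqrt_square H(2) S(1)[unfolded S_def])
  have S_gap: "Re (cinner (S x) x) \<le> K * Re (cinner (S (S x)) x)" for x
  proof -
    have "Re (cinner (S x) x) = (norm (Q x))\<^sup>2"
      using selfadj_square_norm[OF pos_contraction_selfadj[OF Q(1)]] by (simp add: QQ)
    also have "\<dots> \<le> C * M * Re (cinner (H x) x)" using C(2)[of x] M by (simp add: Re_H)
    also have "\<dots> \<le> K * Re (cinner (S (S x)) x)"
      using pos_contraction_nonneg[OF H(2), of x] by (simp add: SS K_def distrib_right)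
    finally show ?thesis .
  qed
  have "Re (cinner (H (H x)) x) \<le> K\<^sup>2 * Re (cinner (H (H (H x))) x)" for x
    using gap_of_fourth_root[OF pos_contraction_selfadj[OF S(1)] pos_contraction_selfadj[OF Q(1)]
        pos_contraction_selfadj[OF H(2)] QQ _ SS _ S_gap] K
      pos_sqrt_commute[OF S(1) pos_contraction_bop[OF S(1)]]
    by (simp add: Q_def)
  moreover have "K\<^sup>2 \<ge> 1" using K by (simp add: one_le_power)
  ultimately show ?thesis using that by blast
qed

lemma common_kernel_annihilator_in_ideal:
  assumes R: "vna R" and I: "left_ideal scaleC R I" and closed: "norm_closed scaleC I"
    and F: "finite F" "F \<subseteq> R" and I_gen: "I = left_ideal_generated scaleC R F"
    and T: "T \<in> R" and T_ker: "\<And>x. (\<And>a. a \<in> F \<Longrightarrow> a x = 0) \<Longrightarrow> T x = 0"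
  shows "T \<in> I"
proof -
  obtain H M where H: "H \<in> I" "pos_contraction H" and M: "M > 0"
    and Re_H: "\<And>x. Re (cinner (H x) x) = (\<Sum>a\<in>F. (norm (a x))\<^sup>2) / M"
    using positive_generator[OF R I F] I_gen left_ideal_generated_superset by blast
  obtain K where K: "K \<ge> 1" and gap: "\<And>x. Re (cinner (H (H x)) x) \<le> K * Re (cinner (H (H (H x))) x)"
    using generator_spectral_gap[OF R I closed F I_gen H M Re_H] by blast
  have "(norm (H z - H (H z)))\<^sup>2 \<le> (1 - 1 / K) * (norm (H z))\<^sup>2" for z
    using compl_contracts_range[OF H(2) _ gap] K by simp
  moreover have "0 \<le> 1 - 1 / K" "1 - 1 / K < 1" using K by simp_all
  moreover have "T p = 0" if "H p = 0" for p
  proof (rule T_ker)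
    fix a assume "a \<in> F"
    have "(\<Sum>a\<in>F. (norm (a p))\<^sup>2) = 0" using Re_H[of p] M that by simp
    with F(1) \<open>a \<in> F\<close> show "a p = 0" by (simp add: sum_nonneg_eq_0_iff)
  qed
  ultimately show ?thesis by (intro kernel_annihilator_in_ideal[OF R I closed H(2,1) _ _ _ T])
qed

definition wot_adherent :: "('h \<Rightarrow> 'h) set \<Rightarrow> ('h \<Rightarrow> 'h) \<Rightarrow> bool" where
  "wot_adherent J T \<longleftrightarrow>
     (\<forall>\<epsilon>>0. \<forall>P. finite P \<longrightarrow> (\<exists>A\<in>J. \<forall>(x, y)\<in>P. cmod (cinner (T x - A x) y) < \<epsilon>))"

lemma wot_closed_iff: "wot_closed scaleC cinner S \<longleftrightarrow> (\<forall>T. bop T \<and> wot_adherent S T \<longrightarrow> T \<in> S)"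
  by (simp add: wot_closed_def wot_adherent_def)

lemma wot_adherent_mono: "J \<subseteq> S \<Longrightarrow> wot_adherent J T \<Longrightarrow> wot_adherent S T"
  unfolding wot_adherent_def by (meson subsetD)

lemma wot_adherent_vanishes:
  assumes T: "wot_adherent J T" and J: "\<And>A. A \<in> J \<Longrightarrow> A x = 0"
  shows "T x = 0"
proof (rule ccontr)
  assume "T x \<noteq> 0"
  then have "(norm (T x))\<^sup>2 > 0" by simp
  from T[unfolded wot_adherent_def, rule_format, OF this, of "{(x, T x)}"]
  obtain A where "A \<in> J" "cmod (cinner (T x - A x) (T x)) < (norm (T x))\<^sup>2" by auto
  moreover from J[OF this(1)] have "A x = 0" .
  ultimately have "cmod (cinner (T x) (T x)) < (norm (T x))\<^sup>2" by simp
  then show False by (simp only: cinner_self_norm norm_of_real)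
qed

end

theorem corollary3p6:
  fixes scaleC :: "complex \<Rightarrow> 'h::banach \<Rightarrow> 'h"
    and cinner :: "'h \<Rightarrow> 'h \<Rightarrow> complex"
    and R I :: "('h \<Rightarrow> 'h) set"
  assumes "complex_hilbert_space scaleC cinner"
    and "von_neumann_algebra scaleC cinner R"
    and "left_ideal scaleC R I"
    and "norm_closed scaleC I"
    and "finitely_generated_left_ideal scaleC R I"
  shows "wot_closed scaleC cinner I"
proof -
  interpret complex_hilbert_space scaleC cinner by fact
  note R = assms(2) and I = assms(3) and closed = assms(4)
  obtain F where F: "finite F" "F \<subseteq> R" and I_gen: "I = left_ideal_generated scaleC R F"
    using assms(5) by (auto simp: finitely_generated_left_ideal_def)
  show ?thesis unfolding wot_closed_iff
  proof (intro allI impI, elim conjE)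
    fix T assume T: "bop T" "wot_adherent I T"
    have "wot_adherent R T"
      by (rule wot_adherent_mono[OF _ T(2)]) (use I in \<open>simp add: left_ideal_def\<close>)
    then have "T \<in> R" using R T(1) by (simp add: von_neumann_algebra_def wot_closed_iff)
    moreover have "T x = 0" if x: "\<And>a. a \<in> F \<Longrightarrow> a x = 0" for x
    proof (rule wot_adherent_vanishes[OF T(2)])
      fix A assume "A \<in> I"
      then show "A x = 0" by (intro left_ideal_generated_vanishes[OF R F(2) _ x]) (simp add: I_gen)
    qed
    ultimately show "T \<in> I"
      by (rule common_kernel_annihilator_in_ideal[OF R I closed F I_gen])
  qed
qed

end
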